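(* Let $k$ be any field and let $m,n\ge 1$. There exists a straight line program $\Gamma^{tR}$ of length $O(mn^2+n^3)$ which, on input the entries of an $m\times n$ matrix $A=(a_{ij})$ over $k$, has as its order-$n^2$ output the $n^2$ entries of the triangular reduced row echelon form of $A$. In particular, each entry of the triangular reduced row echelon form of $A$ is a constructible function of the $a_{ij}$ (an element of the ring generated from $k[a_{ij}]$ by ring operations and the quasi-inverse).
   Context: The quasi-inverse of a function $f$ is $\{f\}(p)=1/f(p)$ if $f(p)\neq0$ and $0$ otherwise. A straight line program on inputs $a_{-m'},\dots,a_{-1}$ (in tape cells $-m',\dots,-1$) is a finite list of instructions $\Gamma_0,\dots,\Gamma_{L-1}$; instruction $\Gamma_i$ writes into cell $i$ one of: $a_{i-j}+a_{i-k}$, $a_{i-j}-a_{i-k}$, $a_{i-j}\cdot a_{i-k}$, $\{a_{i-j}\}$, a constant $c\in k$, or a copy ("recall") of $a_{i-j}$, with $j,k$ positive integers. Its length is $L$, and its order-$d$ output is $(a_{L-d},\dots,a_{L-1})$. The triangular reduced row echelon form (tRREF) of an $m\times n$ matrix $A$ is the $n\times n$ matrix $R_A$ whose $j$-th row is nonzero if and only if the (usual) reduced row echelon form of $A$ has a pivot in column $j$, in which case the $j$-th row of $R_A$ is the row of the RREF of $A$ containing that pivot. Thus the RREF of $A$ has a pivot in column $j$ iff the $(j,j)$ entry of $R_A$ equals $1$ (and otherwise it is $0$). *)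

theory Defs
  imports "Jordan_Normal_Form.Gauss_Jordan_Elimination"
begin

definition qinv :: "'a::field \<Rightarrow> 'a" where
  "qinv x = (if x = 0 then 0 else 1 / x)"

text \<open>Instruction Gamma_i writing into cell i. The natural-number arguments
  are the offsets j, k: the operand a_(i-j) refers to cell i-j.\<close>
datatype 'a instr =
    Add nat nat | Sub nat nat | Mul nat nat | QInv nat | Const 'a | Recall nat

text \<open>The tape is represented as the list of all cells written so far,
  a_(-m'), ..., a_(-1), a_0, ..., a_(i-1); the cell i-j is then the
  element at position (length tape - j).\<close>
definition cell :: "'a list \<Rightarrow> nat \<Rightarrow> 'a" where
  "cell tape j = tape ! (length tape - j)"

fun eval_instr :: "'a::field instr \<Rightarrow> 'a list \<Rightarrow> 'a" where
  "eval_instr (Add j k) t = cell t j + cell t k"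
| "eval_instr (Sub j k) t = cell t j - cell t k"
| "eval_instr (Mul j k) t = cell t j * cell t k"
| "eval_instr (QInv j) t = qinv (cell t j)"
| "eval_instr (Const c) t = c"
| "eval_instr (Recall j) t = cell t j"

fun offsets :: "'a instr \<Rightarrow> nat set" where
  "offsets (Add j k) = {j, k}"
| "offsets (Sub j k) = {j, k}"
| "offsets (Mul j k) = {j, k}"
| "offsets (QInv j) = {j}"
| "offsets (Const c) = {}"
| "offsets (Recall j) = {j}"

text \<open>A program on m' inputs is well formed if every offset j used by
  instruction i is positive and refers to an existing cell (i - j >= -m').\<close>
definition valid_slp :: "nat \<Rightarrow> 'a instr list \<Rightarrow> bool" where
  "valid_slp m' prog \<longleftrightarrow>
     (\<forall>i < length prog. \<forall>j \<in> offsets (prog ! i). 1 \<le> j \<and> j \<le> m' + i)"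

definition run_slp :: "'a::field instr list \<Rightarrow> 'a list \<Rightarrow> 'a list" where
  "run_slp prog inputs = fold (\<lambda>ins t. t @ [eval_instr ins t]) prog inputs"

definition slp_output :: "'a::field instr list \<Rightarrow> nat \<Rightarrow> 'a list \<Rightarrow> 'a list" where
  "slp_output prog d inputs = (let t = run_slp prog inputs in drop (length t - d) t)"

definition entries :: "'a mat \<Rightarrow> 'a list" where
  "entries A = concat (map (\<lambda>i. map (\<lambda>j. A $$ (i, j)) [0..<dim_col A]) [0..<dim_row A])"

text \<open>The reduced row echelon form: the unique matrix in reduced row echelon
  form (JNF's row_echelon_form is the reduced one) that is row equivalent to A.\<close>
definition rref :: "'a::field mat \<Rightarrow> 'a mat" where
  "rref A = (THE R. R \<in> carrier_mat (dim_row A) (dim_col A) \<and> row_echelon_form R \<and>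
      (\<exists>P. P \<in> carrier_mat (dim_row A) (dim_row A) \<and> invertible_mat P \<and> R = P * A))"

definition pivot_at :: "'a::field mat \<Rightarrow> nat \<Rightarrow> nat \<Rightarrow> bool" where
  "pivot_at R i j \<longleftrightarrow> i < dim_row R \<and> R $$ (i, j) = 1 \<and> (\<forall>j' < j. R $$ (i, j') = 0)"

definition trref :: "'a::field mat \<Rightarrow> 'a mat" where
  "trref A = (let R = rref A; n = dim_col A in
     mat n n (\<lambda>(j, l). if \<exists>i. pivot_at R i j then R $$ (THE i. pivot_at R i j, l) else 0))"

inductive constructible :: "nat \<Rightarrow> nat \<Rightarrow> ('a::field mat \<Rightarrow> 'a) \<Rightarrow> bool"
  for m n where
    cf_const: "constructible m n (\<lambda>A. c)"
  | cf_entry: "i < m \<Longrightarrow> j < n \<Longrightarrow> constructible m n (\<lambda>A. A $$ (i, j))"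
  | cf_add: "constructible m n f \<Longrightarrow> constructible m n g \<Longrightarrow> constructible m n (\<lambda>A. f A + g A)"
  | cf_sub: "constructible m n f \<Longrightarrow> constructible m n g \<Longrightarrow> constructible m n (\<lambda>A. f A - g A)"
  | cf_mul: "constructible m n f \<Longrightarrow> constructible m n g \<Longrightarrow> constructible m n (\<lambda>A. f A * g A)"
  | cf_qinv: "constructible m n f \<Longrightarrow> constructible m n (\<lambda>A. qinv (f A))"

end

theory Submission
  imports Defs "HOL-Library.Function_Algebras"
begin

text \<open>
  The tRREF is an invariant of the row space: among \<open>n \<times> n\<close> tables of triangular echelon
  shape there is exactly one with a given row space (\<open>tri_echelon_unique\<close>).  It is built
  incrementally.  To insert a row \<open>v\<close> into such a table, sift \<open>v\<close> through the pivot rows;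
  if the result \<open>w\<close> is nonzero with first nonzero coordinate \<open>p\<close>, make \<open>w / w p\<close> the new
  row \<open>p\<close> and clear column \<open>p\<close> in the other rows (\<open>insert_row\<close>).  This step uses only
  ring operations and the quasi-inverse (the first nonzero coordinate is found through prefix
  products of the indicators \<open>w\<^sub>j {w\<^sub>j}\<close>), so a gadget of \<open>6n\<^sup>2 + 10n\<close> instructions performs
  it.  Running the gadget once per row and copying the table to the end of the tape gives the
  program.  Every cell of a straight line program is a constructible function of the input,
  which yields the second claim.
\<close>

section \<open>Row vectors and triangular echelon tables\<close>

text \<open>Row vectors are functions \<open>nat \<Rightarrow> 'a\<close> (with finite support in practice); with
  pointwise scaling they form a vector space over the field, in which row spaces live.\<close>

definition fscale :: "'a::field \<Rightarrow> (nat \<Rightarrow> 'a) \<Rightarrow> nat \<Rightarrow> 'a" where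
  "fscale c f = (\<lambda>l. c * f l)"

interpretation fspace: Modules.module "fscale :: 'a::field \<Rightarrow> (nat \<Rightarrow> 'a) \<Rightarrow> nat \<Rightarrow> 'a"
  by standard (auto simp: fscale_def fun_eq_iff algebra_simps)

lemma sum_fun_apply: "(sum f A) x = (\<Sum>a\<in>A. f a x)"
  by (induct A rule: infinite_finite_induct) auto

lemma span_trans: "x \<in> fspace.span A \<Longrightarrow> A \<subseteq> fspace.span B \<Longrightarrow> x \<in> fspace.span B"
  using fspace.span_mono[of A "fspace.span B"] fspace.span_span[of B] by auto

definition trow :: "(nat \<Rightarrow> nat \<Rightarrow> 'a::field) \<Rightarrow> nat \<Rightarrow> nat \<Rightarrow> nat \<Rightarrow> 'a" where
  "trow T n j = (\<lambda>l. if l < n then T j l else 0)"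

definition trows :: "nat \<Rightarrow> (nat \<Rightarrow> nat \<Rightarrow> 'a::field) \<Rightarrow> (nat \<Rightarrow> 'a) set" where
  "trows n T = trow T n ` {..<n}"

definition tri_echelon :: "nat \<Rightarrow> (nat \<Rightarrow> nat \<Rightarrow> 'a::field) \<Rightarrow> bool" where
  "tri_echelon n T \<longleftrightarrow> (\<forall>j<n. T j j = 0 \<or> T j j = 1) \<and>
     (\<forall>j<n. T j j = 0 \<longrightarrow> (\<forall>l<n. T j l = 0)) \<and>
     (\<forall>j<n. T j j = 1 \<longrightarrow> (\<forall>l<j. T j l = 0)) \<and>
     (\<forall>j<n. \<forall>j'<n. j \<noteq> j' \<longrightarrow> T j' j' = 1 \<longrightarrow> T j j' = 0)"

lemma tri_diag: "tri_echelon n T \<Longrightarrow> j < n \<Longrightarrow> T j j = 0 \<or> T j j = 1"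
  unfolding tri_echelon_def by blast

lemma tri_zero_row: "tri_echelon n T \<Longrightarrow> j < n \<Longrightarrow> T j j \<noteq> 1 \<Longrightarrow> l < n \<Longrightarrow> T j l = 0"
  unfolding tri_echelon_def by blast

lemma tri_left_zero: "tri_echelon n T \<Longrightarrow> j < n \<Longrightarrow> T j j = 1 \<Longrightarrow> l < j \<Longrightarrow> T j l = 0"
  unfolding tri_echelon_def by blast

lemma tri_pivot_col:
  "tri_echelon n T \<Longrightarrow> j < n \<Longrightarrow> j' < n \<Longrightarrow> j \<noteq> j' \<Longrightarrow> T j' j' = 1 \<Longrightarrow> T j j' = 0"
  unfolding tri_echelon_def by blast

text \<open>Each row of \<open>T\<close> equals the combination of the pivot rows whose coefficients are its
  own pivot coordinates: for a pivot row only its own pivot coordinate is nonzero, and a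
  non-pivot row is zero.\<close>

lemma tri_row_expansion:
  assumes tri: "tri_echelon n T" and j': "j' < n"
  shows "trow T n j' l = (\<Sum>j<n. trow T n j' j * T j j * trow T n j l)"
proof (cases "T j' j' = 1")
  case False
  hence "trow T n j' i = 0" for i using tri_zero_row[OF tri j' False, of i] by (simp add: trow_def)
  thus ?thesis by simp
next
  case True
  have "trow T n j' j * T j j * trow T n j l = (if j = j' then trow T n j' l else 0)"
    if j: "j < n" for j
  proof (cases "j = j'")
    case False
    have "T j j = 1 \<Longrightarrow> T j' j = 0" using tri_pivot_col[OF tri j' j] False by simp
    thus ?thesis using tri_diag[OF tri j] False j by (auto simp: trow_def)
  qed (use True j' in \<open>simp add: trow_def\<close>)
  hence "(\<Sum>j<n. trow T n j' j * T j j * trow T n j l) = (\<Sum>j<n. if j = j' then trow T n j' l else 0)"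
    by (intro sum.cong) auto
  thus ?thesis using j' by simp
qed

lemma tri_span_expansion:
  assumes tri: "tri_echelon n T" and x: "x \<in> fspace.span (trows n T)"
  shows "x l = (\<Sum>j<n. x j * T j j * trow T n j l)"
  using x
proof (induction arbitrary: l rule: fspace.span_induct_alt)
  case base thus ?case by simp
next
  case (step c x y)
  from step(1) obtain j' where j': "j' < n" and xe: "x = trow T n j'" unfolding trows_def by auto
  have "(fscale c x + y) l = c * x l + y l" by (simp add: fscale_def)
  also have "\<dots> = c * (\<Sum>j<n. x j * T j j * trow T n j l) + (\<Sum>j<n. y j * T j j * trow T n j l)"
    using tri_row_expansion[OF tri j', of l] step(2)[of l] xe by simp
  also have "\<dots> = (\<Sum>j<n. (fscale c x + y) j * T j j * trow T n j l)"
    by (simp add: fscale_def sum_distrib_left sum.distrib[symmetric] algebra_simps)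
  finally show ?case .
qed

text \<open>If the rows of \<open>T'\<close> lie in the row space of \<open>T\<close>, every pivot of \<open>T'\<close> is a pivot of
  \<open>T\<close>: otherwise the expansion of that pivot row would give \<open>1 = 0\<close>.\<close>

lemma tri_pivot_transfer:
  assumes tri: "tri_echelon n T" and tri': "tri_echelon n T'"
    and sp: "trows n T' \<subseteq> fspace.span (trows n T)"
    and p: "p < n" and T'p: "T' p p = 1"
  shows "T p p = 1"
proof (rule ccontr)
  assume np: "T p p \<noteq> 1"
  have "trow T' n p \<in> fspace.span (trows n T)" using sp p unfolding trows_def by auto
  from tri_span_expansion[OF tri this, of p]
  have "1 = (\<Sum>j<n. trow T' n p j * T j j * trow T n j p)" using p T'p by (simp add: trow_def)
  also have "\<dots> = 0"
  proof (rule sum.neutral, intro ballI)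
    fix j assume "j \<in> {..<n}"
    hence j: "j < n" by simp
    consider "j < p" | "j = p" | "p < j" by arith
    thus "trow T' n p j * T j j * trow T n j p = 0"
    proof cases
      case 1 thus ?thesis using tri_left_zero[OF tri' p T'p 1] by (simp add: trow_def)
    next
      case 2 thus ?thesis using tri_zero_row[OF tri p np p] p by (simp add: trow_def)
    next
      case 3 thus ?thesis using tri_diag[OF tri j] tri_left_zero[OF tri j _ 3] by (auto simp: trow_def)
    qed
  qed
  finally show False by simp
qed

lemma tri_echelon_unique:
  assumes tri: "tri_echelon n T" and tri': "tri_echelon n T'"
    and sp: "fspace.span (trows n T) = fspace.span (trows n T')"
    and j: "j < n" and l: "l < n"
  shows "T j l = T' j l"
proof -
  have s1: "trows n T' \<subseteq> fspace.span (trows n T)" using sp fspace.span_superset by auto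
  have s2: "trows n T \<subseteq> fspace.span (trows n T')" using sp fspace.span_superset by auto
  have piv: "T i i = 1 \<longleftrightarrow> T' i i = 1" if "i < n" for i
    using tri_pivot_transfer[OF tri tri' s1 that] tri_pivot_transfer[OF tri' tri s2 that] by blast
  show ?thesis
  proof (cases "T j j = 1")
    case False
    thus ?thesis using piv[OF j] tri_zero_row[OF tri j False l] tri_zero_row[OF tri' j _ l] by simp
  next
    case True
    have "trow T' n j \<in> fspace.span (trows n T)" using s1 j unfolding trows_def by auto
    from tri_span_expansion[OF tri this, of l]
    have "T' j l = (\<Sum>i<n. trow T' n j i * T i i * trow T n i l)" using l by (simp add: trow_def)
    also have "\<dots> = (\<Sum>i<n. if i = j then T j l else 0)"
    proof (rule sum.cong[OF refl])
      fix i assume "i \<in> {..<n}"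
      hence i: "i < n" by simp
      have "T i i = 1 \<Longrightarrow> i \<noteq> j \<Longrightarrow> T' j i = 0" using tri_pivot_col[OF tri' j i] piv[OF i] by simp
      thus "trow T' n j i * T i i * trow T n i l = (if i = j then T j l else 0)"
        using True piv[OF j] tri_diag[OF tri i] i j l by (auto simp: trow_def)
    qed
    also have "\<dots> = T j l" using j by simp
    finally show ?thesis by simp
  qed
qed

section \<open>Inserting one row into a triangular echelon table\<close>

text \<open>The vector \<open>v\<close> sifted through the pivot rows of \<open>T\<close>; it vanishes at all pivots
  (\<open>sifted_at_pivot\<close>).\<close>

definition sifted :: "nat \<Rightarrow> (nat \<Rightarrow> nat \<Rightarrow> 'a::field) \<Rightarrow> (nat \<Rightarrow> 'a) \<Rightarrow> nat \<Rightarrow> 'a" where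
  "sifted n T v = (\<lambda>l. v l - (\<Sum>j<n. v j * T j j * trow T n j l))"

definition first_nz :: "(nat \<Rightarrow> 'a::field) \<Rightarrow> nat \<Rightarrow> 'a" where
  "first_nz w j = (if w j \<noteq> 0 \<and> (\<forall>i<j. w i = 0) then 1 else 0)"

text \<open>If the sifted vector \<open>w\<close> is nonzero with first
  nonzero coordinate \<open>p\<close>, the normalised row \<open>u = w / w p\<close> becomes row \<open>p\<close> and column \<open>p\<close> is
  cleared from the other rows; if \<open>w = 0\<close> the table is unchanged.  The formula avoids case
  distinctions: they are encoded by \<open>first_nz\<close> and the quasi-inverse, so that the step can be
  carried out by a straight line program.\<close>

definition insert_row :: "nat \<Rightarrow> (nat \<Rightarrow> nat \<Rightarrow> 'a::field) \<Rightarrow> (nat \<Rightarrow> 'a) \<Rightarrow> nat \<Rightarrow> nat \<Rightarrow> 'a" where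
  "insert_row n T v = (let w = sifted n T v; c = (\<Sum>j<n. first_nz w j * qinv (w j)) in
     (\<lambda>j l. T j l + (first_nz w j - (\<Sum>l'<n. first_nz w l' * T j l')) * (c * w l)))"

lemma sifted_at_pivot:
  assumes tri: "tri_echelon n T" and j: "j < n" and Tj: "T j j = 1"
  shows "sifted n T v j = 0"
proof -
  have "v i * T i i * trow T n i j = (if i = j then v j else 0)" if i: "i < n" for i
    using tri_diag[OF tri i] tri_pivot_col[OF tri i j _ Tj] Tj j by (cases "i = j") (auto simp: trow_def)
  hence "(\<Sum>i<n. v i * T i i * trow T n i j) = (\<Sum>i<n. if i = j then v j else 0)"
    by (intro sum.cong) auto
  thus ?thesis using j by (simp add: sifted_def)
qed

lemma sifted_as_comb:
  assumes v: "\<forall>l\<ge>n. v l = 0"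
  shows "sifted n T v = v - (\<Sum>j<n. fscale (v j * T j j) (trow T n j))"
  using v by (auto simp: fun_eq_iff sifted_def sum_fun_apply fscale_def trow_def)

lemma sifted_in_span: "\<forall>l\<ge>n. v l = 0 \<Longrightarrow> sifted n T v \<in> fspace.span (insert v (trows n T))"
  unfolding sifted_as_comb
  by (intro fspace.span_diff fspace.span_sum fspace.span_scale fspace.span_base) (auto simp: trows_def)

lemma vec_in_sifted_span:
  assumes v: "\<forall>l\<ge>n. v l = 0"
  shows "v \<in> fspace.span (insert (sifted n T v) (trows n T))"
proof -
  have "v = sifted n T v + (\<Sum>j<n. fscale (v j * T j j) (trow T n j))"
    unfolding sifted_as_comb[OF v] by simp
  also have "\<dots> \<in> fspace.span (insert (sifted n T v) (trows n T))"
    by (intro fspace.span_add fspace.span_sum fspace.span_scale fspace.span_base) (auto simp: trows_def)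
  finally show ?thesis .
qed

lemma insert_row_dependent:
  assumes v: "\<forall>l\<ge>n. v l = 0" and w0: "\<forall>l<n. sifted n T v l = 0"
  shows "insert_row n T v = T" and "fspace.span (insert v (trows n T)) = fspace.span (trows n T)"
proof -
  have "first_nz (sifted n T v) j = 0" if "j < n" for j using w0 that by (simp add: first_nz_def)
  thus "insert_row n T v = T" by (simp add: insert_row_def Let_def fun_eq_iff)
  have "sifted n T v = 0"
  proof (rule ext)
    fix l show "sifted n T v l = 0 l"
      using w0 v by (cases "l < n") (auto simp: sifted_def trow_def)
  qed
  hence "v \<in> fspace.span (insert 0 (trows n T))" using vec_in_sifted_span[OF v, of T] by simp
  moreover have "insert 0 (trows n T) \<subseteq> fspace.span (trows n T)"
    using fspace.span_zero fspace.span_superset by blast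
  ultimately have "v \<in> fspace.span (trows n T)" by (rule span_trans)
  thus "fspace.span (insert v (trows n T)) = fspace.span (trows n T)"
    unfolding fspace.span_eq using fspace.span_superset by blast
qed

context
  fixes n :: nat and T :: "nat \<Rightarrow> nat \<Rightarrow> 'a::field" and v :: "nat \<Rightarrow> 'a" and p :: nat
  assumes tri: "tri_echelon n T" and v: "\<forall>l\<ge>n. v l = 0" and p: "p < n"
    and w_p: "sifted n T v p \<noteq> 0" and w_before: "\<forall>i<p. sifted n T v i = 0"
begin

private abbreviation "w \<equiv> sifted n T v"
private abbreviation "u \<equiv> \<lambda>l. w l / w p"

text \<open>Since \<open>first_nz w\<close> is the indicator of \<open>p\<close> and the scaling constant is \<open>1 / w p\<close>, the
  step takes the explicit form: every row \<open>j\<close> loses \<open>T j p\<close> times \<open>u\<close>, and row \<open>p\<close> gains \<open>u\<close>.\<close>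

lemma insert_row_explicit:
  "insert_row n T v j l = T j l - T j p * u l + (if j = p then u l else 0)"
proof -
  have sf: "first_nz w i = (if i = p then 1 else 0)" for i
    using w_p w_before by (cases i p rule: linorder_cases) (auto simp: first_nz_def)
  have "(\<Sum>i<n. first_nz w i * qinv (w i)) = (\<Sum>i<n. if i = p then qinv (w p) else 0)"
    by (intro sum.cong) (auto simp: sf)
  hence c: "(\<Sum>i<n. first_nz w i * qinv (w i)) = 1 / w p"
    using p w_p by (simp add: qinv_def)
  have "(\<Sum>l'<n. first_nz w l' * T j l') = (\<Sum>l'<n. if l' = p then T j p else 0)"
    by (intro sum.cong) (auto simp: sf)
  hence col: "(\<Sum>l'<n. first_nz w l' * T j l') = T j p"
    using p by simp
  show ?thesis unfolding insert_row_def Let_def c col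
    using w_p by (cases "j = p") (simp_all add: sf field_simps)
qed

text \<open>Row \<open>p\<close> of \<open>T\<close> is zero: \<open>w p \<noteq> 0\<close> shows that \<open>p\<close> is not a pivot.\<close>

lemma row_p_zero: "T p l = 0" if "l < n"
  using sifted_at_pivot[OF tri p, of v] w_p tri_zero_row[OF tri p _ that] by auto

lemma insert_row_p: "l < n \<Longrightarrow> insert_row n T v p l = u l"
  using insert_row_explicit row_p_zero p by simp

lemma insert_row_other: "j \<noteq> p \<Longrightarrow> insert_row n T v j l = T j l - T j p * u l"
  using insert_row_explicit by simp

text \<open>\<open>u\<close> vanishes at the pivots of \<open>T\<close>, so diagonal entries other than \<open>p\<close> are unchanged.\<close>

lemma u_at_pivot: "j < n \<Longrightarrow> T j j = 1 \<Longrightarrow> u j = 0"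
  using sifted_at_pivot[OF tri] by simp

lemma insert_row_diag:
  assumes j: "j < n" and jp: "j \<noteq> p"
  shows "insert_row n T v j j = T j j"
proof (cases "T j j = 1")
  case True thus ?thesis using insert_row_other[OF jp] u_at_pivot[OF j] by simp
next
  case False thus ?thesis using insert_row_other[OF jp] tri_zero_row[OF tri j False] j p by simp
qed

lemma insert_row_tri_echelon: "tri_echelon n (insert_row n T v)"
  unfolding tri_echelon_def
proof (intro conjI allI impI)
  fix j assume j: "j < n"
  show "insert_row n T v j j = 0 \<or> insert_row n T v j j = 1"
    using insert_row_p[OF p] w_p insert_row_diag[OF j] tri_diag[OF tri j] by (cases "j = p") auto
next
  fix j l assume j: "j < n" and z: "insert_row n T v j j = 0" and l: "l < n"
  have jp: "j \<noteq> p" using z insert_row_p[OF p] w_p by auto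
  hence "T j j \<noteq> 1" using z insert_row_diag[OF j] by simp
  thus "insert_row n T v j l = 0"
    using insert_row_other[OF jp] tri_zero_row[OF tri j _ l] tri_zero_row[OF tri j _ p] by simp
next
  fix j l assume j: "j < n" and o: "insert_row n T v j j = 1" and l: "l < j"
  show "insert_row n T v j l = 0"
  proof (cases "j = p")
    case True thus ?thesis using insert_row_p w_before l j by simp
  next
    case False
    hence Tj: "T j j = 1" using o insert_row_diag[OF j] by simp
    have "T j p = 0 \<or> u l = 0"
      using tri_left_zero[OF tri j Tj, of p] w_before l False by (cases "p < j") auto
    thus ?thesis using insert_row_other[OF False] tri_left_zero[OF tri j Tj l] by auto
  qed
next
  fix j j' assume j: "j < n" and j': "j' < n" and ne: "j \<noteq> j'" and o: "insert_row n T v j' j' = 1"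
  show "insert_row n T v j j' = 0"
  proof (cases "j' = p")
    case True thus ?thesis using insert_row_other[of j] ne w_p by simp
  next
    case False
    hence Tj: "T j' j' = 1" using o insert_row_diag[OF j'] by simp
    thus ?thesis using insert_row_explicit[of j j'] u_at_pivot[OF j' Tj] tri_pivot_col[OF tri j j' ne]
      by simp
  qed
qed

lemma sifted_eq_new_row: "w = fscale (w p) (trow (insert_row n T v) n p)"
proof (rule ext)
  fix l show "w l = fscale (w p) (trow (insert_row n T v) n p) l"
    using insert_row_p w_p v by (cases "l < n") (auto simp: fscale_def trow_def sifted_def)
qed

lemma old_row_eq:
  "j \<noteq> p \<Longrightarrow> trow T n j = trow (insert_row n T v) n j + fscale (T j p) (trow (insert_row n T v) n p)"
  using insert_row_other insert_row_p by (auto simp: fun_eq_iff fscale_def trow_def)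

lemma insert_row_span:
  "fspace.span (trows n (insert_row n T v)) = fspace.span (insert v (trows n T))"
proof -
  let ?T' = "insert_row n T v"
  have new_p: "trow ?T' n p = fscale (1 / w p) w"
    using arg_cong[OF sifted_eq_new_row, of "fscale (1 / w p)"] w_p by (simp add: fscale_def)
  have p_in: "trow ?T' n p \<in> fspace.span (insert v (trows n T))"
    unfolding new_p by (rule fspace.span_scale[OF sifted_in_span[OF v]])
  have "trow ?T' n j \<in> fspace.span (insert v (trows n T))" if j: "j < n" for j
  proof (cases "j = p")
    case False
    have "trow T n j \<in> fspace.span (insert v (trows n T))"
      using j by (intro fspace.span_base) (auto simp: trows_def)
    hence "trow T n j - fscale (T j p) (trow ?T' n p) \<in> fspace.span (insert v (trows n T))"
      by (intro fspace.span_diff fspace.span_scale p_in)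
    thus ?thesis using old_row_eq[OF False] by simp
  qed (use p_in in simp)
  hence sub1: "trows n ?T' \<subseteq> fspace.span (insert v (trows n T))" unfolding trows_def by auto
  have p_in': "trow ?T' n p \<in> fspace.span (trows n ?T')"
    using p by (intro fspace.span_base) (auto simp: trows_def)
  have "trow T n j \<in> fspace.span (trows n ?T')" if j: "j < n" for j
  proof (cases "j = p")
    case True
    hence "trow T n j = 0" using row_p_zero by (auto simp: fun_eq_iff trow_def)
    thus ?thesis using fspace.span_zero by simp
  next
    case False
    have "trow ?T' n j \<in> fspace.span (trows n ?T')" using j by (intro fspace.span_base) (auto simp: trows_def)
    thus ?thesis unfolding old_row_eq[OF False] by (intro fspace.span_add fspace.span_scale p_in')
  qed
  moreover have "w \<in> fspace.span (trows n ?T')"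
    by (subst sifted_eq_new_row) (rule fspace.span_scale[OF p_in'])
  ultimately have "insert w (trows n T) \<subseteq> fspace.span (trows n ?T')" unfolding trows_def by auto
  hence "v \<in> fspace.span (trows n ?T')" using span_trans[OF vec_in_sifted_span[OF v]] by blast
  hence sub2: "insert v (trows n T) \<subseteq> fspace.span (trows n ?T')"
    using \<open>insert w (trows n T) \<subseteq> _\<close> by auto
  show ?thesis using sub1 sub2 unfolding fspace.span_eq by blast
qed

end

lemma insert_row_correct:
  assumes tri: "tri_echelon n T" and v: "\<forall>l\<ge>n. v l = 0"
  shows "tri_echelon n (insert_row n T v)"
    and "fspace.span (trows n (insert_row n T v)) = fspace.span (insert v (trows n T))"
proof -
  have "tri_echelon n (insert_row n T v) \<and>
        fspace.span (trows n (insert_row n T v)) = fspace.span (insert v (trows n T))"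
  proof (cases "\<exists>l<n. sifted n T v l \<noteq> 0")
    case True
    define p where "p = (LEAST l. sifted n T v l \<noteq> 0)"
    from True obtain l0 where l0: "l0 < n" "sifted n T v l0 \<noteq> 0" by blast
    have "sifted n T v p \<noteq> 0" unfolding p_def by (rule LeastI, rule l0(2))
    moreover have "p < n" using Least_le[of _ l0] l0 unfolding p_def by fastforce
    moreover have "\<forall>i<p. sifted n T v i = 0" using not_less_Least unfolding p_def by blast
    ultimately show ?thesis using insert_row_tri_echelon insert_row_span tri v by blast
  next
    case False thus ?thesis using insert_row_dependent[OF v] tri by auto
  qed
  thus "tri_echelon n (insert_row n T v)"
    and "fspace.span (trows n (insert_row n T v)) = fspace.span (insert v (trows n T))" by auto
qed

definition mrow :: "'a::field mat \<Rightarrow> nat \<Rightarrow> nat \<Rightarrow> nat \<Rightarrow> 'a" where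
  "mrow A n r = (\<lambda>l. if l < n then A $$ (r, l) else 0)"

fun echelon_prefix :: "'a::field mat \<Rightarrow> nat \<Rightarrow> nat \<Rightarrow> nat \<Rightarrow> nat \<Rightarrow> 'a" where
  "echelon_prefix A n 0 = (\<lambda>j l. 0)"
| "echelon_prefix A n (Suc r) = insert_row n (echelon_prefix A n r) (mrow A n r)"

lemma span_insert_cong:
  "fspace.span S = fspace.span S' \<Longrightarrow> fspace.span (insert a S) = fspace.span (insert a S')"
  unfolding fspace.span_insert by simp

lemma echelon_prefix_correct:
  "tri_echelon n (echelon_prefix A n r) \<and>
   fspace.span (trows n (echelon_prefix A n r)) = fspace.span (mrow A n ` {..<r})"
proof (induction r)
  case 0
  have "trows n (\<lambda>j l. 0::'a) \<subseteq> fspace.span {}"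
    using fspace.span_zero unfolding trows_def trow_def by (auto simp: fun_eq_iff)
  hence "fspace.span (trows n (\<lambda>j l. 0::'a)) = fspace.span {}" unfolding fspace.span_eq by simp
  thus ?case by (simp add: tri_echelon_def)
next
  case (Suc r)
  have v: "\<forall>l\<ge>n. mrow A n r l = 0" by (simp add: mrow_def)
  from insert_row_correct[OF conjunct1[OF Suc.IH] v] span_insert_cong[OF conjunct2[OF Suc.IH]]
  show ?case by (simp add: lessThan_Suc)
qed

section \<open>The reduced row echelon form and its triangular form\<close>

definition is_rref :: "'a::field mat \<Rightarrow> 'a mat \<Rightarrow> bool" where
  "is_rref A R \<longleftrightarrow> R \<in> carrier_mat (dim_row A) (dim_col A) \<and> row_echelon_form R \<and>
      (\<exists>P. P \<in> carrier_mat (dim_row A) (dim_row A) \<and> invertible_mat P \<and> R = P * A)"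

text \<open>Left multiplication only forms linear combinations of rows.\<close>

lemma mrow_mult_in_span:
  assumes A: "A \<in> carrier_mat m n" and P: "P \<in> carrier_mat m' m" and i: "i < m'"
  shows "mrow (P * A) n i \<in> fspace.span (mrow A n ` {..<m})"
proof -
  have "mrow (P * A) n i = (\<Sum>k<m. fscale (P $$ (i, k)) (mrow A n k))"
  proof (rule ext)
    fix l
    have "l < n \<Longrightarrow> (P * A) $$ (i, l) = (\<Sum>k<m. P $$ (i, k) * A $$ (k, l))"
      using A P i by (simp add: scalar_prod_def lessThan_atLeast0)
    thus "mrow (P * A) n i l = (\<Sum>k<m. fscale (P $$ (i, k)) (mrow A n k)) l"
      by (simp add: mrow_def sum_fun_apply fscale_def)
  qed
  also have "\<dots> \<in> fspace.span (mrow A n ` {..<m})"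
    by (intro fspace.span_sum fspace.span_scale fspace.span_base) auto
  finally show ?thesis .
qed

text \<open>An invertible row transformation preserves the row space.\<close>

lemma is_rref_span:
  assumes A: "A \<in> carrier_mat m n" and R: "is_rref A R"
  shows "fspace.span (mrow R n ` {..<m}) = fspace.span (mrow A n ` {..<m})"
proof -
  from R A obtain P where P: "P \<in> carrier_mat m m" "invertible_mat P" and RPA: "R = P * A"
    unfolding is_rref_def by auto
  from P(2) obtain Q where PQ: "inverts_mat P Q" and QP: "inverts_mat Q P"
    unfolding invertible_mat_def by auto
  have PQ1: "P * Q = 1\<^sub>m m" using PQ P unfolding inverts_mat_def by simp
  have QP1: "Q * P = 1\<^sub>m (dim_row Q)" using QP unfolding inverts_mat_def .
  have Q: "Q \<in> carrier_mat m m"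
    using arg_cong[OF PQ1, of dim_col] arg_cong[OF QP1, of dim_col] P by auto
  have "Q * R = A" unfolding RPA using assoc_mult_mat[OF Q P(1) A, symmetric] QP1 Q A by simp
  moreover have "R \<in> carrier_mat m n" using RPA P A by simp
  ultimately have "mrow A n ` {..<m} \<subseteq> fspace.span (mrow R n ` {..<m})"
    using mrow_mult_in_span[OF _ Q] by auto
  moreover have "mrow R n ` {..<m} \<subseteq> fspace.span (mrow A n ` {..<m})"
    using mrow_mult_in_span[OF A P(1)] RPA by auto
  ultimately show ?thesis unfolding fspace.span_eq by blast
qed

lemma pivot_at_iff:
  assumes R: "(R :: 'a::field mat) \<in> carrier_mat m n" and pf: "pivot_fun R f n" and j: "j < n"
  shows "pivot_at R i j \<longleftrightarrow> i < m \<and> f i = j"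
proof -
  have d: "dim_row R = m" using R by simp
  note pd = pivot_funD[OF d pf]
  show ?thesis
  proof
    assume "pivot_at R i j"
    hence i: "i < m" and r1: "R $$ (i, j) = 1" and lz: "\<forall>j'<j. R $$ (i, j') = 0"
      unfolding pivot_at_def using d by auto
    have "\<not> f i < j" using pd(4)[OF i] lz j by auto
    moreover have "\<not> j < f i" using pd(2)[OF i] r1 by auto
    ultimately show "i < m \<and> f i = j" using i by simp
  next
    assume "i < m \<and> f i = j"
    thus "pivot_at R i j" unfolding pivot_at_def using d pd(2,4) j by auto
  qed
qed

lemma pivot_inj:
  assumes R: "(R :: 'a::field mat) \<in> carrier_mat m n" and pf: "pivot_fun R f n"
    and i: "i < m" "i' < m" "f i = f i'" "f i < n"
  shows "i = i'"
proof (rule ccontr)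
  assume "i \<noteq> i'"
  hence "R $$ (i', f i) = 0" using pivot_funD(5)[OF _ pf i(1) i(4) i(2)] R by simp
  moreover have "R $$ (i', f i') = 1" using pivot_funD(4)[OF _ pf i(2)] R i by simp
  ultimately show False using i by simp
qed

lemma pivot_mono:
  assumes R: "(R :: 'a::field mat) \<in> carrier_mat m n" and pf: "pivot_fun R f n"
    and i: "i < i'" "i' < m" "f i' < n"
  shows "f i < f i'"
proof -
  have "i + (i' - i) < m" using i by simp
  from pivot_bound[OF _ pf this] R i show ?thesis by simp
qed

text \<open>By definition \<open>trref A\<close> is this table of \<open>rref A\<close>.\<close>

definition tri_of :: "'a::field mat \<Rightarrow> nat \<Rightarrow> nat \<Rightarrow> 'a" where
  "tri_of R = (\<lambda>j l. if \<exists>i. pivot_at R i j then R $$ (THE i. pivot_at R i j, l) else 0)"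

lemma tri_of_pivot:
  assumes R: "R \<in> carrier_mat m n" and pf: "pivot_fun R f n" and i: "i < m" and fi: "f i < n"
  shows "tri_of R (f i) l = R $$ (i, l)"
proof -
  have pa: "pivot_at R i' (f i) \<longleftrightarrow> i' = i" for i'
    using pivot_at_iff[OF R pf fi] pivot_inj[OF R pf _ i] i fi by auto
  hence "(THE i'. pivot_at R i' (f i)) = i" by simp
  thus ?thesis unfolding tri_of_def using pa by auto
qed

lemma tri_of_nonpivot:
  assumes R: "R \<in> carrier_mat m n" and pf: "pivot_fun R f n" and j: "j < n"
    and np: "\<not> (\<exists>i<m. f i = j)"
  shows "tri_of R j l = 0"
  using pivot_at_iff[OF R pf j] np unfolding tri_of_def by auto

lemma tri_of_diag:
  assumes R: "R \<in> carrier_mat m n" and pf: "pivot_fun R f n" and j: "j < n"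
  shows "tri_of R j j = 1 \<longleftrightarrow> (\<exists>i<m. f i = j)"
proof
  assume "\<exists>i<m. f i = j"
  then obtain i where i: "i < m" "f i = j" by blast
  thus "tri_of R j j = 1" using tri_of_pivot[OF R pf i(1)] pivot_funD(4)[OF _ pf i(1)] R j by auto
qed (use tri_of_nonpivot[OF R pf j] in force)

lemma tri_of_tri_echelon:
  assumes R: "R \<in> carrier_mat m n" and pf: "pivot_fun R f n"
  shows "tri_echelon n (tri_of R)"
proof -
  have d: "dim_row R = m" using R by simp
  note pd = pivot_funD[OF d pf]
  have row: "(\<exists>i<m. f i = j \<and> (\<forall>l. tri_of R j l = R $$ (i, l))) \<or> (\<forall>l. tri_of R j l = 0)"
    if "j < n" for j
    using tri_of_pivot[OF R pf] tri_of_nonpivot[OF R pf that] that by (cases "\<exists>i<m. f i = j") auto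
  show ?thesis
    unfolding tri_echelon_def
  proof (intro conjI allI impI)
    fix j assume j: "j < n"
    show "tri_of R j j = 0 \<or> tri_of R j j = 1"
      using row[OF j] pd(4) j by auto
  next
    fix j l assume j: "j < n" and z: "tri_of R j j = 0" and "l < n"
    show "tri_of R j l = 0"
      using row[OF j] pd(4) j z by auto
  next
    fix j l assume j: "j < n" and o: "tri_of R j j = 1" and l: "l < j"
    show "tri_of R j l = 0"
      using row[OF j] pd(2) l o by auto
  next
    fix j j' assume j: "j < n" and j': "j' < n" and ne: "j \<noteq> j'" and o: "tri_of R j' j' = 1"
    obtain i' where i': "i' < m" "f i' = j'" using tri_of_diag[OF R pf j'] o by blast
    have "i \<noteq> i'" if "f i = j" for i using that i' ne by auto
    thus "tri_of R j j' = 0"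
      using row[OF j] pd(5)[OF i'(1)] i' j' by auto
  qed
qed

lemma tri_of_span:
  assumes R: "R \<in> carrier_mat m n" and pf: "pivot_fun R f n"
  shows "fspace.span (trows n (tri_of R)) = fspace.span (mrow R n ` {..<m})"
proof -
  have "trow (tri_of R) n j \<in> fspace.span (mrow R n ` {..<m})" if j: "j < n" for j
  proof (cases "\<exists>i<m. f i = j")
    case True
    then obtain i where i: "i < m" "f i = j" by auto
    hence "trow (tri_of R) n j = mrow R n i"
      using tri_of_pivot[OF R pf i(1)] j by (auto simp: fun_eq_iff trow_def mrow_def)
    thus ?thesis using i by (auto intro: fspace.span_base)
  next
    case False
    hence "trow (tri_of R) n j = 0" using tri_of_nonpivot[OF R pf j] by (auto simp: fun_eq_iff trow_def)
    thus ?thesis using fspace.span_zero by simp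
  qed
  moreover have "mrow R n i \<in> fspace.span (trows n (tri_of R))" if i: "i < m" for i
  proof (cases "f i < n")
    case True
    hence "mrow R n i = trow (tri_of R) n (f i)"
      using tri_of_pivot[OF R pf i] by (auto simp: fun_eq_iff trow_def mrow_def)
    thus ?thesis using True by (auto simp: trows_def intro: fspace.span_base)
  next
    case False
    hence "mrow R n i = 0" using pivot_funD(2)[OF _ pf i] R by (auto simp: fun_eq_iff mrow_def)
    thus ?thesis using fspace.span_zero by simp
  qed
  ultimately show ?thesis unfolding fspace.span_eq trows_def by blast
qed

text \<open>Two pivot functions with the same set of pivot columns agree: if \<open>g1\<close> and \<open>g2\<close> agree
  below \<open>i\<close>, then \<open>g1 i < g2 i\<close> is impossible, since column \<open>g1 i\<close> would have to be the
  pivot of some other row of the second matrix.\<close>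

lemma pivot_fun_not_less:
  assumes S1: "(S1 :: 'a::field mat) \<in> carrier_mat m n" and pg1: "pivot_fun S1 g1 n"
    and S2: "(S2 :: 'a mat) \<in> carrier_mat m n" and pg2: "pivot_fun S2 g2 n"
    and same: "\<And>j. j < n \<Longrightarrow> (\<exists>i<m. g1 i = j) \<Longrightarrow> (\<exists>i<m. g2 i = j)"
    and below: "\<forall>i'<i. g1 i' = g2 i'" and i: "i < m"
  shows "\<not> g1 i < g2 i"
proof
  assume lt: "g1 i < g2 i"
  moreover have "g2 i \<le> n" using pivot_funD(1)[OF _ pg2 i] S2 by simp
  ultimately have g1n: "g1 i < n" by simp
  then obtain i'' where i'': "i'' < m" "g2 i'' = g1 i" using same i by blast
  consider "i'' < i" | "i'' = i" | "i < i''" by arith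
  thus False
  proof cases
    case 1
    hence "g1 i'' = g1 i" using below i'' by simp
    thus False using pivot_inj[OF S1 pg1 i''(1) i] g1n 1 by simp
  next
    case 2 thus False using i'' lt by simp
  next
    case 3 thus False using pivot_mono[OF S2 pg2 3 i''(1)] i'' g1n lt by simp
  qed
qed

lemma pivot_funs_eq:
  assumes R1: "(R1 :: 'a::field mat) \<in> carrier_mat m n" and pf1: "pivot_fun R1 f1 n"
    and R2: "(R2 :: 'a mat) \<in> carrier_mat m n" and pf2: "pivot_fun R2 f2 n"
    and same: "\<And>j. j < n \<Longrightarrow> (\<exists>i<m. f1 i = j) \<longleftrightarrow> (\<exists>i<m. f2 i = j)"
  shows "i < m \<Longrightarrow> f1 i = f2 i"
proof (induction i rule: less_induct)
  case (less i)
  have "\<not> f1 i < f2 i"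
    by (rule pivot_fun_not_less[OF R1 pf1 R2 pf2]) (use same less in auto)
  moreover have "\<not> f2 i < f1 i"
    by (rule pivot_fun_not_less[OF R2 pf2 R1 pf1]) (use same less in auto)
  ultimately show ?case by simp
qed

lemma is_rref_tri_of:
  assumes A: "A \<in> carrier_mat m n" and R: "is_rref A R"
  shows "\<exists>f. R \<in> carrier_mat m n \<and> pivot_fun R f n \<and> tri_echelon n (tri_of R) \<and>
     fspace.span (trows n (tri_of R)) = fspace.span (mrow A n ` {..<m})"
proof -
  have Rc: "R \<in> carrier_mat m n" using R A unfolding is_rref_def by auto
  obtain f where pf: "pivot_fun R f n" using R Rc unfolding is_rref_def row_echelon_form_def by auto
  show ?thesis using Rc pf tri_of_tri_echelon[OF Rc pf] tri_of_span[OF Rc pf] is_rref_span[OF A R]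
    by auto
qed

text \<open>Uniqueness of the reduced row echelon form: both candidates have the same triangular
  table, hence the same pivot columns, hence the same pivot functions and rows.\<close>

lemma is_rref_unique:
  assumes A: "A \<in> carrier_mat m n" and R1: "is_rref A R1" and R2: "is_rref A R2"
  shows "R1 = R2"
proof -
  obtain f1 where R1c: "R1 \<in> carrier_mat m n" and pf1: "pivot_fun R1 f1 n"
    and tri1: "tri_echelon n (tri_of R1)"
    and sp1: "fspace.span (trows n (tri_of R1)) = fspace.span (mrow A n ` {..<m})"
    using is_rref_tri_of[OF A R1] by blast
  obtain f2 where R2c: "R2 \<in> carrier_mat m n" and pf2: "pivot_fun R2 f2 n"
    and tri2: "tri_echelon n (tri_of R2)"
    and sp2: "fspace.span (trows n (tri_of R2)) = fspace.span (mrow A n ` {..<m})"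
    using is_rref_tri_of[OF A R2] by blast
  have same: "tri_of R1 j l = tri_of R2 j l" if "j < n" "l < n" for j l
    using tri_echelon_unique[OF tri1 tri2 _ that] sp1 sp2 by simp
  have "(\<exists>i<m. f1 i = j) \<longleftrightarrow> (\<exists>i<m. f2 i = j)" if j: "j < n" for j
    using tri_of_diag[OF R1c pf1 j] tri_of_diag[OF R2c pf2 j] same[OF j j] by simp
  hence feq: "f1 i = f2 i" if "i < m" for i using pivot_funs_eq[OF R1c pf1 R2c pf2 _ that] by blast
  show ?thesis
  proof (rule eq_matI)
    fix i l assume "i < dim_row R2" and "l < dim_col R2"
    hence i: "i < m" and l: "l < n" using R2c by auto
    show "R1 $$ (i, l) = R2 $$ (i, l)"
    proof (cases "f1 i < n")
      case True
      thus ?thesis using tri_of_pivot[OF R1c pf1 i True] tri_of_pivot[OF R2c pf2 i] same[OF True l] feq[OF i]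
        by simp
    next
      case False
      hence "f1 i = n" "f2 i = n" using pivot_funD(1)[OF _ pf1 i] R1c feq[OF i] by auto
      thus ?thesis using pivot_funD(2)[OF _ pf1 i] pivot_funD(2)[OF _ pf2 i] R1c R2c l by simp
    qed
  qed (use R1c R2c in auto)
qed

lemma is_rref_exists:
  assumes A: "A \<in> carrier_mat m n"
  shows "\<exists>R. is_rref A R"
proof -
  obtain R B where g: "gauss_jordan A A = (R, B)" by (cases "gauss_jordan A A")
  from gauss_jordan_transform[OF A A g, of undefined] obtain P
    where P: "P \<in> Units (ring_mat TYPE('a) m undefined)" and RPA: "R = P * A" by auto
  from P obtain Q where Pc: "P \<in> carrier_mat m m" and Qc: "Q \<in> carrier_mat m m"
    and QP: "Q * P = 1\<^sub>m m" and PQ: "P * Q = 1\<^sub>m m"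
    unfolding Units_def by (auto simp: ring_mat_simps)
  have "invertible_mat P"
    unfolding invertible_mat_def inverts_mat_def using Pc Qc PQ QP by auto
  hence "is_rref A R"
    unfolding is_rref_def using A gauss_jordan_carrier(1)[OF A A g] gauss_jordan_row_echelon[OF A g] RPA Pc
    by auto
  thus ?thesis by blast
qed

text \<open>Hence the definite description defining \<open>rref A\<close> is well defined.\<close>

lemma rref_is_rref: "A \<in> carrier_mat m n \<Longrightarrow> is_rref A (rref A)"
  using theI'[of "is_rref A"] is_rref_exists is_rref_unique
  unfolding rref_def is_rref_def[symmetric] by blast

lemma trref_carrier: "trref A \<in> carrier_mat (dim_col A) (dim_col A)"
  unfolding trref_def Let_def by simp

lemma echelon_prefix_trref:
  assumes A: "A \<in> carrier_mat m n" and j: "j < n" and l: "l < n"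
  shows "echelon_prefix A n m j l = trref A $$ (j, l)"
proof -
  obtain f where tri: "tri_echelon n (tri_of (rref A))"
    and sp: "fspace.span (trows n (tri_of (rref A))) = fspace.span (mrow A n ` {..<m})"
    using is_rref_tri_of[OF A rref_is_rref[OF A]] by blast
  have "trref A $$ (j, l) = tri_of (rref A) j l"
    using A j l unfolding trref_def tri_of_def Let_def by simp
  moreover have "echelon_prefix A n m j l = tri_of (rref A) j l"
    using tri_echelon_unique[OF _ tri _ j l] echelon_prefix_correct[of n A m] sp by simp
  ultimately show ?thesis by simp
qed

lemma run_slp_Nil[simp]: "run_slp [] t = t"
  by (simp add: run_slp_def)

lemma run_slp_Cons[simp]: "run_slp (x # xs) t = run_slp xs (t @ [eval_instr x t])"
  by (simp add: run_slp_def)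

lemma run_slp_append: "run_slp (c1 @ c2) t = run_slp c2 (run_slp c1 t)"
  by (simp add: run_slp_def)

lemma run_slp_extends: "\<exists>xs. run_slp c t = t @ xs \<and> length xs = length c"
proof (induction c arbitrary: t)
  case (Cons x c)
  from Cons.IH[of "t @ [eval_instr x t]"] show ?case by force
qed simp

lemma length_run_slp[simp]: "length (run_slp c t) = length t + length c"
  using run_slp_extends[of c t] by auto

lemma valid_slp_Nil[simp]: "valid_slp p []"
  by (simp add: valid_slp_def)

lemma valid_slp_Cons: "valid_slp p (x # xs) \<longleftrightarrow> (\<forall>j\<in>offsets x. 1 \<le> j \<and> j \<le> p) \<and> valid_slp (Suc p) xs"
  unfolding valid_slp_def by (auto simp: All_less_Suc2)

text \<open>Validity composes: the second part sees the cells written by the first as inputs.\<close>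

lemma valid_slp_append: "valid_slp p (c1 @ c2) \<longleftrightarrow> valid_slp p c1 \<and> valid_slp (p + length c1) c2"
  by (induction c1 arbitrary: p) (auto simp: valid_slp_Cons)

lemma cell_absolute: "a < length t \<Longrightarrow> cell t (length t - a) = t ! a"
  by (simp add: cell_def)

lemma entries_length: "A \<in> carrier_mat m n \<Longrightarrow> length (entries A) = m * n"
  by (simp add: entries_def length_concat sum_list_triv comp_def)

lemma entries_nth:
  assumes A: "A \<in> carrier_mat m n" and i: "i < m" and j: "j < n"
  shows "entries A ! (i * n + j) = A $$ (i, j)"
proof -
  have "concat (map (\<lambda>i. map (\<lambda>j. A $$ (i, j)) [0..<n]) [0..<m]) ! (i * n + j) = A $$ (i, j)"
    using i j
  proof (induction m arbitrary: i)
    case (Suc m)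
    have len: "length (concat (map (\<lambda>i. map (\<lambda>j. A $$ (i, j)) [0..<n]) [0..<m])) = m * n"
      by (simp add: length_concat sum_list_triv comp_def)
    show ?case
    proof (cases "i < m")
      case True
      have "i * n + j < Suc i * n" using Suc.prems(2) by simp
      also have "\<dots> \<le> m * n" using True by (intro mult_le_mono1) simp
      finally have "i * n + j < m * n" .
      thus ?thesis using Suc True len by (simp add: nth_append)
    next
      case False
      hence "i = m" using Suc.prems(1) by simp
      thus ?thesis using Suc.prems(2) len by (simp add: nth_append)
    qed
  qed simp
  thus ?thesis using A unfolding entries_def by simp
qed

section \<open>Constructible functions and programs\<close>

definition constructible_on :: "nat \<Rightarrow> nat \<Rightarrow> ('a::field mat \<Rightarrow> 'a) \<Rightarrow> bool" where
  "constructible_on m n g \<longleftrightarrow> (\<exists>f. constructible m n f \<and> (\<forall>A\<in>carrier_mat m n. f A = g A))"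

lemma constructible_on_binop:
  assumes "constructible_on m n g" "constructible_on m n h"
    and "\<And>f f'. constructible m n f \<Longrightarrow> constructible m n f' \<Longrightarrow> constructible m n (\<lambda>A. op (f A) (f' A))"
  shows "constructible_on m n (\<lambda>A. op (g A) (h A))"
proof -
  obtain f f' where "constructible m n f" "\<forall>A\<in>carrier_mat m n. f A = g A"
    and "constructible m n f'" "\<forall>A\<in>carrier_mat m n. f' A = h A"
    using assms(1,2) unfolding constructible_on_def by blast
  thus ?thesis unfolding constructible_on_def using assms(3) by (intro exI[of _ "\<lambda>A. op (f A) (f' A)"]) auto
qed

lemma eval_instr_constructible:
  assumes "\<And>j. j \<in> offsets x \<Longrightarrow> constructible_on m n (\<lambda>A. cell (tape A) j)"
  shows "constructible_on m n (\<lambda>A. eval_instr x (tape A))"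
proof (cases x)
  case (QInv j)
  then obtain f where "constructible m n f" "\<forall>A\<in>carrier_mat m n. f A = cell (tape A) j"
    using assms unfolding constructible_on_def by auto
  thus ?thesis using QInv unfolding constructible_on_def
    by (intro exI[of _ "\<lambda>A. qinv (f A)"]) (auto intro: cf_qinv)
next
  case (Const c) thus ?thesis unfolding constructible_on_def by (auto intro: cf_const)
next
  case (Add j k) thus ?thesis using assms by (auto intro!: constructible_on_binop[where op = "(+)"] cf_add)
next
  case (Sub j k) thus ?thesis using assms by (auto intro!: constructible_on_binop[where op = "(-)"] cf_sub)
next
  case (Mul j k) thus ?thesis using assms by (auto intro!: constructible_on_binop[where op = "(*)"] cf_mul)
next
  case (Recall j) thus ?thesis using assms by simp
qed

lemma slp_cell_constructible:
  assumes "valid_slp (m * n) prog" and "k < m * n + length prog"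
  shows "constructible_on m n (\<lambda>A. run_slp prog (entries A) ! k)"
  using assms
proof (induction prog arbitrary: k rule: rev_induct)
  case Nil
  hence n: "0 < n" by (cases n) auto
  have "k div n < m" "k mod n < n" using Nil n by (auto simp: less_mult_imp_div_less)
  moreover have "k = k div n * n + k mod n" by simp
  ultimately have "\<forall>A\<in>carrier_mat m n. A $$ (k div n, k mod n) = entries A ! k"
    using entries_nth by (metis (no_types))
  thus ?case unfolding constructible_on_def using cf_entry \<open>k div n < m\<close> \<open>k mod n < n\<close>
    by (intro exI[of _ "\<lambda>A. A $$ (k div n, k mod n)"]) auto
next
  case (snoc x c)
  have valid: "valid_slp (m * n) c" and offs: "\<forall>j\<in>offsets x. 1 \<le> j \<and> j \<le> m * n + length c"
    using snoc.prems(1) by (auto simp: valid_slp_append valid_slp_Cons)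
  let ?tape = "\<lambda>A. run_slp c (entries A)"
  have len: "A \<in> carrier_mat m n \<Longrightarrow> length (?tape A) = m * n + length c" for A
    by (simp add: entries_length)
  have snoc_run: "run_slp (c @ [x]) (entries A) = ?tape A @ [eval_instr x (?tape A)]" for A
    by (simp add: run_slp_append)
  show ?case
  proof (cases "k < m * n + length c")
    case True
    have "constructible_on m n (\<lambda>A. ?tape A ! k)" using snoc.IH[OF valid True] .
    thus ?thesis using True len unfolding constructible_on_def snoc_run by (simp add: nth_append)
  next
    case False
    hence k: "k = m * n + length c" using snoc.prems(2) by simp
    have "constructible_on m n (\<lambda>A. cell (?tape A) j)" if "j \<in> offsets x" for j
    proof -
      have "m * n + length c - j < m * n + length c" using offs that by fastforce
      hence "constructible_on m n (\<lambda>A. ?tape A ! (m * n + length c - j))"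
        by (rule snoc.IH[OF valid])
      thus ?thesis using len unfolding constructible_on_def cell_def by simp
    qed
    hence "constructible_on m n (\<lambda>A. eval_instr x (?tape A))" by (rule eval_instr_constructible)
    thus ?thesis using len k unfolding constructible_on_def snoc_run by (simp add: nth_append)
  qed
qed

section \<open>Program generators and their Hoare logic\<close>

text \<open>A generator is given the current length \<open>p\<close> of the tape, i.e.\ the absolute address of
  the next cell to be written, and returns a result (typically absolute addresses of cells
  holding computed values) together with the code to append.  Operands are named by
  absolute addresses, which the generator turns into the backward offsets of the program.\<close>

type_synonym ('a, 'r) gen = "nat \<Rightarrow> 'r \<times> 'a instr list"

definition gbind :: "('a, 'r) gen \<Rightarrow> ('r \<Rightarrow> ('a, 's) gen) \<Rightarrow> ('a, 's) gen" where
  "gbind g f = (\<lambda>p. case g p of (r1, c1) \<Rightarrow> (case f r1 (p + length c1) of (r2, c2) \<Rightarrow> (r2, c1 @ c2)))"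

definition gret :: "'r \<Rightarrow> ('a, 'r) gen" where
  "gret r = (\<lambda>p. (r, []))"

definition emit :: "(nat \<Rightarrow> 'a instr) \<Rightarrow> ('a, nat) gen" where
  "emit f = (\<lambda>p. (p, [f p]))"

definition add_g :: "nat \<Rightarrow> nat \<Rightarrow> ('a, nat) gen" where
  "add_g a b = emit (\<lambda>p. Add (p - a) (p - b))"

definition sub_g :: "nat \<Rightarrow> nat \<Rightarrow> ('a, nat) gen" where
  "sub_g a b = emit (\<lambda>p. Sub (p - a) (p - b))"

definition mul_g :: "nat \<Rightarrow> nat \<Rightarrow> ('a, nat) gen" where
  "mul_g a b = emit (\<lambda>p. Mul (p - a) (p - b))"

definition qinv_g :: "nat \<Rightarrow> ('a, nat) gen" where
  "qinv_g a = emit (\<lambda>p. QInv (p - a))"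

definition const_g :: "'a \<Rightarrow> ('a, nat) gen" where
  "const_g c = emit (\<lambda>p. Const c)"

definition hoare :: "('a::field list \<Rightarrow> bool) \<Rightarrow> ('a, 'r) gen \<Rightarrow> ('r \<Rightarrow> 'a list \<Rightarrow> bool) \<Rightarrow> bool" where
  "hoare P g Q \<longleftrightarrow>
     (\<forall>t. P t \<longrightarrow> (case g (length t) of (r, c) \<Rightarrow> valid_slp (length t) c \<and> Q r (run_slp c t)))"

lemma hoare_bind:
  assumes g: "hoare P g Q" and f: "\<And>r. hoare (Q r) (f r) R"
  shows "hoare P (gbind g f) R"
  unfolding hoare_def
proof (intro allI impI)
  fix t assume P: "P t"
  obtain r1 c1 where g1: "g (length t) = (r1, c1)" by (cases "g (length t)")
  with g P have v1: "valid_slp (length t) c1" and Q: "Q r1 (run_slp c1 t)"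
    unfolding hoare_def by (auto split: prod.splits)
  obtain r2 c2 where f2: "f r1 (length t + length c1) = (r2, c2)"
    by (cases "f r1 (length t + length c1)")
  with f[of r1] Q have v2: "valid_slp (length t + length c1) c2" and "R r2 (run_slp c2 (run_slp c1 t))"
    unfolding hoare_def by (auto split: prod.splits)
  thus "case gbind g f (length t) of (r, c) \<Rightarrow> valid_slp (length t) c \<and> R r (run_slp c t)"
    unfolding gbind_def using g1 f2 v1 v2 by (simp add: valid_slp_append run_slp_append)
qed

lemma hoare_ret: "(\<And>t. P t \<Longrightarrow> Q r t) \<Longrightarrow> hoare P (gret r) Q"
  unfolding hoare_def gret_def by simp

lemma hoare_conseq:
  assumes "hoare P g Q" and "\<And>t. P' t \<Longrightarrow> P t" and "\<And>r t. Q r t \<Longrightarrow> Q' r t"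
  shows "hoare P' g Q'"
  using assms unfolding hoare_def by (fastforce split: prod.splits)

lemma hoareD: "hoare P g Q \<Longrightarrow> P t \<Longrightarrow> g (length t) = (r, c) \<Longrightarrow> valid_slp (length t) c \<and> Q r (run_slp c t)"
  unfolding hoare_def by force

text \<open>Assertions about cells are \<open>stable\<close> if they survive appending to the tape; such
  assertions are framed through all later code.\<close>

definition stable :: "('a list \<Rightarrow> bool) \<Rightarrow> bool" where
  "stable F \<longleftrightarrow> (\<forall>t xs. F t \<longrightarrow> F (t @ xs))"

definition holds :: "'a list \<Rightarrow> nat \<Rightarrow> 'a \<Rightarrow> bool" where
  "holds t a x \<longleftrightarrow> a < length t \<and> t ! a = x"

abbreviation holds_list :: "'a list \<Rightarrow> nat \<Rightarrow> nat list \<Rightarrow> (nat \<Rightarrow> 'a) \<Rightarrow> bool" where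
  "holds_list t n as f \<equiv> length as = n \<and> (\<forall>i<n. holds t (as ! i) (f i))"

abbreviation holds_table :: "'a list \<Rightarrow> nat \<Rightarrow> (nat \<Rightarrow> nat \<Rightarrow> nat) \<Rightarrow> (nat \<Rightarrow> nat \<Rightarrow> 'a) \<Rightarrow> bool" where
  "holds_table t n tA T \<equiv> \<forall>j<n. \<forall>l<n. holds t (tA j l) (T j l)"

lemma stable_holds: "stable (\<lambda>t. holds t a x)"
  unfolding stable_def holds_def by (auto simp: nth_append)

lemma stable_conj: "stable F \<Longrightarrow> stable G \<Longrightarrow> stable (\<lambda>t. F t \<and> G t)"
  unfolding stable_def by auto

lemma stable_all: "(\<And>x. stable (F x)) \<Longrightarrow> stable (\<lambda>t. \<forall>x. F x t)"
  unfolding stable_def by auto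

lemma stable_imp: "stable F \<Longrightarrow> stable (\<lambda>t. P \<longrightarrow> F t)"
  unfolding stable_def by auto

lemma stable_const: "stable (\<lambda>t. P)"
  unfolding stable_def by auto

lemmas stable_intros = stable_holds stable_conj stable_all stable_imp stable_const

lemma emit_spec:
  assumes "stable F"
    and "\<And>t. F t \<Longrightarrow> (\<forall>j\<in>offsets (f (length t)). 1 \<le> j \<and> j \<le> length t) \<and> eval_instr (f (length t)) t = x"
  shows "hoare F (emit f) (\<lambda>r t. F t \<and> holds t r x)"
  using assms unfolding hoare_def emit_def stable_def holds_def by (simp add: valid_slp_Cons run_slp_def)

lemma add_g_spec:
  assumes "stable F" and pre: "\<And>t. F t \<Longrightarrow> holds t a x \<and> holds t b y"
  shows "hoare F (add_g a b) (\<lambda>r t. F t \<and> holds t r (x + y))"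
  unfolding add_g_def by (rule emit_spec[OF assms(1)]) (frule pre, auto simp: holds_def cell_absolute)

lemma sub_g_spec:
  assumes "stable F" and pre: "\<And>t. F t \<Longrightarrow> holds t a x \<and> holds t b y"
  shows "hoare F (sub_g a b) (\<lambda>r t. F t \<and> holds t r (x - y))"
  unfolding sub_g_def by (rule emit_spec[OF assms(1)]) (frule pre, auto simp: holds_def cell_absolute)

lemma mul_g_spec:
  assumes "stable F" and pre: "\<And>t. F t \<Longrightarrow> holds t a x \<and> holds t b y"
  shows "hoare F (mul_g a b) (\<lambda>r t. F t \<and> holds t r (x * y))"
  unfolding mul_g_def by (rule emit_spec[OF assms(1)]) (frule pre, auto simp: holds_def cell_absolute)

lemma qinv_g_spec:
  assumes "stable F" and pre: "\<And>t. F t \<Longrightarrow> holds t a x"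
  shows "hoare F (qinv_g a) (\<lambda>r t. F t \<and> holds t r (qinv x))"
  unfolding qinv_g_def by (rule emit_spec[OF assms(1)]) (frule pre, auto simp: holds_def cell_absolute)

lemma const_g_spec: "stable F \<Longrightarrow> hoare F (const_g c) (\<lambda>r t. F t \<and> holds t r c)"
  unfolding const_g_def by (rule emit_spec) auto

definition glen :: "('a, 'r) gen \<Rightarrow> nat \<Rightarrow> bool" where
  "glen g L \<longleftrightarrow> (\<forall>p. length (snd (g p)) = L)"

lemma glen_bind: "glen g L1 \<Longrightarrow> (\<And>r. glen (f r) L2) \<Longrightarrow> glen (gbind g f) (L1 + L2)"
  unfolding glen_def gbind_def by (auto split: prod.splits) (metis snd_conv)+

lemma glen_ret: "glen (gret r) 0"
  unfolding glen_def gret_def by simp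

lemma glen_emit: "glen (emit f) 1"
  unfolding glen_def emit_def by simp

lemma glen_ops:
  "glen (add_g a b) 1" "glen (sub_g a b) 1" "glen (mul_g a b) 1" "glen (qinv_g a) 1" "glen (const_g c) 1"
  unfolding add_g_def sub_g_def mul_g_def qinv_g_def const_g_def by (rule glen_emit)+

fun lincomb_g :: "nat \<Rightarrow> (nat \<Rightarrow> nat) \<Rightarrow> (nat \<Rightarrow> nat) \<Rightarrow> nat \<Rightarrow> ('a, nat) gen" where
  "lincomb_g x cA yA 0 = gret x"
| "lincomb_g x cA yA (Suc k) =
     gbind (lincomb_g x cA yA k) (\<lambda>a. gbind (mul_g (cA k) (yA k)) (\<lambda>q. add_g a q))"

lemma glen_lincomb: "glen (lincomb_g x cA yA k) (2 * k)"
proof (induction k)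
  case (Suc k)
  have "glen (lincomb_g x cA yA (Suc k) :: ('a, nat) gen) (2 * k + (1 + 1))"
    unfolding lincomb_g.simps by (intro glen_bind[OF Suc.IH] glen_bind glen_ops)
  thus ?case by simp
qed (simp add: glen_ret)

lemma lincomb_g_spec:
  assumes st: "stable F"
    and pre: "\<And>t. F t \<Longrightarrow> holds t x xv \<and> (\<forall>i<k. holds t (cA i) (cv i) \<and> holds t (yA i) (yv i))"
  shows "hoare F (lincomb_g x cA yA k) (\<lambda>r t. F t \<and> holds t r (xv + (\<Sum>i<k. cv i * yv i)))"
  using pre
proof (induction k)
  case 0 thus ?case by (auto intro!: hoare_ret)
next
  case (Suc k)
  show ?case unfolding lincomb_g.simps
  proof (rule hoare_bind[OF Suc.IH])
    fix a
    let ?F = "\<lambda>t. F t \<and> holds t a (xv + (\<Sum>i<k. cv i * yv i))"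
    have st1: "stable ?F" by (intro stable_intros st)
    show "hoare ?F (gbind (mul_g (cA k) (yA k)) (\<lambda>q. add_g a q))
            (\<lambda>r t. F t \<and> holds t r (xv + (\<Sum>i<Suc k. cv i * yv i)))"
    proof (rule hoare_bind[OF mul_g_spec[OF st1]])
      fix q
      have st2: "stable (\<lambda>t. ?F t \<and> holds t q (cv k * yv k))" by (intro stable_intros st1)
      show "hoare (\<lambda>t. ?F t \<and> holds t q (cv k * yv k)) (add_g a q)
              (\<lambda>r t. F t \<and> holds t r (xv + (\<Sum>i<Suc k. cv i * yv i)))"
        by (rule hoare_conseq[OF add_g_spec[OF st2]]) (auto simp: add.assoc)
    qed (use Suc.prems in auto)
  qed (use Suc.prems in auto)
qed

fun map_g :: "(nat \<Rightarrow> ('a, 'r) gen) \<Rightarrow> nat \<Rightarrow> ('a, 'r list) gen" where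
  "map_g g 0 = gret []"
| "map_g g (Suc k) = gbind (map_g g k) (\<lambda>rs. gbind (g k) (\<lambda>r. gret (rs @ [r])))"

lemma glen_map: "(\<And>i. glen (g i) L) \<Longrightarrow> glen (map_g g k) (k * L)"
proof (induction k)
  case (Suc k)
  have "glen (map_g g (Suc k)) (k * L + (L + 0))"
    unfolding map_g.simps by (intro glen_bind Suc glen_ret)
  thus ?case by (simp add: add.commute)
qed (simp add: glen_ret)

lemma map_g_spec:
  assumes st: "stable F" and stQ: "\<And>i r. stable (Q i r)"
    and gi: "\<And>i F'. i < k \<Longrightarrow> stable F' \<Longrightarrow> (\<And>t. F' t \<Longrightarrow> F t) \<Longrightarrow>
                    hoare F' (g i) (\<lambda>r t. F' t \<and> Q i r t)"
  shows "hoare F (map_g g k) (\<lambda>rs t. F t \<and> length rs = k \<and> (\<forall>i<k. Q i (rs ! i) t))"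
  using gi
proof (induction k)
  case 0 thus ?case by (auto intro!: hoare_ret)
next
  case (Suc k)
  show ?case unfolding map_g.simps
  proof (rule hoare_bind[OF Suc.IH])
    fix rs
    let ?F = "\<lambda>t. F t \<and> length rs = k \<and> (\<forall>i<k. Q i (rs ! i) t)"
    have "stable ?F" by (intro stable_intros st stQ)
    thus "hoare ?F (gbind (g k) (\<lambda>r. gret (rs @ [r])))
        (\<lambda>rs t. F t \<and> length rs = Suc k \<and> (\<forall>i<Suc k. Q i (rs ! i) t))"
      by (intro hoare_bind[OF Suc.prems[of k ?F]] hoare_ret) (auto simp: nth_append less_Suc_eq)
  qed (use Suc.prems in auto)
qed

lemma map_g_values:
  assumes st: "stable F"
    and gi: "\<And>i F'. i < k \<Longrightarrow> stable F' \<Longrightarrow> (\<And>t. F' t \<Longrightarrow> F t) \<Longrightarrow>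
                    hoare F' (g i) (\<lambda>r t. F' t \<and> holds t r (f i))"
  shows "hoare F (map_g g k) (\<lambda>rs t. F t \<and> holds_list t k rs f)"
  by (rule map_g_spec[OF st stable_holds gi])

definition pointwise_mul_g :: "nat \<Rightarrow> (nat \<Rightarrow> nat) \<Rightarrow> (nat \<Rightarrow> nat) \<Rightarrow> ('a, nat list) gen" where
  "pointwise_mul_g k xA yA = map_g (\<lambda>i. mul_g (xA i) (yA i)) k"

lemma pointwise_mul_g_spec:
  assumes "stable F" and "\<And>t. F t \<Longrightarrow> \<forall>i<k. holds t (xA i) (x i) \<and> holds t (yA i) (y i)"
  shows "hoare F (pointwise_mul_g k xA yA) (\<lambda>rs t. F t \<and> holds_list t k rs (\<lambda>i. x i * y i))"
  unfolding pointwise_mul_g_def using assms by (intro map_g_values mul_g_spec) blast+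

text \<open>For \<open>0/1\<close> indicators \<open>e\<close> and
  \<open>f0 = 1\<close>, \<open>f\<^sub>i e\<^sub>i\<close> is the indicator of the first index with \<open>e\<^sub>i = 1\<close>.\<close>

fun prefix_flags :: "(nat \<Rightarrow> 'a::field) \<Rightarrow> 'a \<Rightarrow> nat \<Rightarrow> 'a" where
  "prefix_flags e f0 0 = f0"
| "prefix_flags e f0 (Suc k) = prefix_flags e f0 k - prefix_flags e f0 k * e k"

lemma prefix_flags_indicator:
  assumes "\<And>i. i < k \<Longrightarrow> e i = (if w i = 0 then 0 else 1)"
  shows "prefix_flags e 1 k = (if \<forall>i<k. w i = 0 then 1 else 0)"
  using assms by (induction k) (auto simp: less_Suc_eq)

fun flags_g :: "nat \<Rightarrow> (nat \<Rightarrow> nat) \<Rightarrow> nat \<Rightarrow> ('a, nat list \<times> nat) gen" where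
  "flags_g f0 eA 0 = gret ([], f0)"
| "flags_g f0 eA (Suc k) = gbind (flags_g f0 eA k) (\<lambda>r.
     gbind (mul_g (snd r) (eA k)) (\<lambda>s. gbind (sub_g (snd r) s) (\<lambda>f. gret (fst r @ [s], f))))"

lemma glen_flags: "glen (flags_g f0 eA k) (2 * k)"
proof (induction k)
  case (Suc k)
  have "glen (flags_g f0 eA (Suc k) :: ('a, nat list \<times> nat) gen) (2 * k + (1 + (1 + 0)))"
    unfolding flags_g.simps by (intro glen_bind[OF Suc.IH] glen_bind glen_ops glen_ret)
  thus ?case by simp
qed (simp add: glen_ret)

lemma flags_g_spec:
  assumes st: "stable F" and pre: "\<And>t. F t \<Longrightarrow> holds t f0 f0v \<and> (\<forall>i<k. holds t (eA i) (e i))"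
  shows "hoare F (flags_g f0 eA k) (\<lambda>r t. F t \<and> holds t (snd r) (prefix_flags e f0v k) \<and>
           holds_list t k (fst r) (\<lambda>i. prefix_flags e f0v i * e i))"
  using pre
proof (induction k)
  case 0 thus ?case by (auto intro!: hoare_ret)
next
  case (Suc k)
  let ?Q = "\<lambda>r t. F t \<and> holds t (snd r) (prefix_flags e f0v k) \<and>
             holds_list t k (fst r) (\<lambda>i. prefix_flags e f0v i * e i)"
  let ?R = "\<lambda>r t. F t \<and> holds t (snd r) (prefix_flags e f0v (Suc k)) \<and>
             holds_list t (Suc k) (fst r) (\<lambda>i. prefix_flags e f0v i * e i)"
  show ?case unfolding flags_g.simps
  proof (rule hoare_bind[OF Suc.IH])
    fix r
    have st1: "stable (?Q r)" by (intro stable_intros st)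
    show "hoare (?Q r) (gbind (mul_g (snd r) (eA k))
            (\<lambda>s. gbind (sub_g (snd r) s) (\<lambda>f. gret (fst r @ [s], f)))) ?R"
    proof (rule hoare_bind[OF mul_g_spec[OF st1]])
      fix s
      have st2: "stable (\<lambda>t. ?Q r t \<and> holds t s (prefix_flags e f0v k * e k))"
        by (intro stable_intros st1)
      show "hoare (\<lambda>t. ?Q r t \<and> holds t s (prefix_flags e f0v k * e k))
          (gbind (sub_g (snd r) s) (\<lambda>f. gret (fst r @ [s], f))) ?R"
        by (intro hoare_bind[OF sub_g_spec[OF st2]] hoare_ret) (auto simp: nth_append less_Suc_eq)
    qed (use Suc.prems in auto)
  qed (use Suc.prems in auto)
qed

section \<open>The row insertion gadget\<close>

text \<open>The value of the insertion step written with exactly the operations performed by the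
  gadget below: \<open>w\<close> is the sifted row, \<open>e\<close> the indicators of its nonzero entries, \<open>s\<close> the
  indicator of its first nonzero entry \<open>p\<close>, \<open>u = w / w p\<close>, and \<open>d j\<close> the multiple of \<open>u\<close> to be
  added to row \<open>j\<close>.  The shapes \<open>0 + \<Sum>\<close> and \<open>\<Sum>i<1\<close> are those of the linear combinations
  computed by \<open>lincomb_g\<close>.\<close>

definition gadget_value :: "nat \<Rightarrow> (nat \<Rightarrow> nat \<Rightarrow> 'a::field) \<Rightarrow> (nat \<Rightarrow> 'a) \<Rightarrow> nat \<Rightarrow> nat \<Rightarrow> 'a" where
  "gadget_value n T v =
    (let w = (\<lambda>l. v l + (\<Sum>j<n. (0 - v j * T j j) * T j l));
         e = (\<lambda>j. w j * qinv (w j));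
         s = (\<lambda>j. prefix_flags e 1 j * e j);
         u = (\<lambda>l. (0 + (\<Sum>j<n. s j * qinv (w j))) * w l);
         d = (\<lambda>j. s j - (0 + (\<Sum>l<n. s l * T j l)))
     in (\<lambda>j l. T j l + (\<Sum>i<(1::nat). d j * u l)))"

lemma gadget_value_insert_row:
  assumes j: "j < n" and l: "l < n"
  shows "gadget_value n T v j l = insert_row n T v j l"
proof -
  define W where "W = (\<lambda>l. v l + (\<Sum>j<n. (0 - v j * T j j) * T j l))"
  define E where "E = (\<lambda>j. W j * qinv (W j))"
  define S where "S = (\<lambda>j. prefix_flags E 1 j * E j)"
  have gadget: "gadget_value n T v = (\<lambda>j l. T j l +
      (\<Sum>i<(1::nat). (S j - (0 + (\<Sum>l<n. S l * T j l))) * ((0 + (\<Sum>j<n. S j * qinv (W j))) * W l)))"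
    unfolding gadget_value_def Let_def S_def E_def W_def by (rule refl)
  define w where "w = sifted n T v"
  have W: "W i = w i" if "i < n" for i
    using that by (simp add: W_def w_def sifted_def trow_def sum_negf[symmetric])
  have "prefix_flags E 1 k = (if \<forall>i<k. w i = 0 then 1 else 0)" if "k \<le> n" for k
    using that by (intro prefix_flags_indicator) (simp add: E_def W qinv_def)
  hence S: "S i = first_nz w i" if "i < n" for i
    using that W[OF that] by (simp add: S_def E_def first_nz_def qinv_def)
  have "(\<Sum>i<n. S i * qinv (W i)) = (\<Sum>i<n. first_nz w i * qinv (w i))"
    and "(\<Sum>i<n. S i * T j i) = (\<Sum>i<n. first_nz w i * T j i)"
    by (simp_all add: S W)
  thus ?thesis
    unfolding gadget insert_row_def Let_def w_def[symmetric] using S[OF j] W[OF l] by simp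
qed

definition neg_pivot_coeffs_g :: "nat \<Rightarrow> nat \<Rightarrow> (nat \<Rightarrow> nat \<Rightarrow> nat) \<Rightarrow> (nat \<Rightarrow> nat) \<Rightarrow> ('a, nat list) gen" where
  "neg_pivot_coeffs_g n a0 tA vA = map_g (\<lambda>j. gbind (mul_g (vA j) (tA j j)) (\<lambda>c. sub_g a0 c)) n"

definition sift_g :: "nat \<Rightarrow> (nat \<Rightarrow> nat \<Rightarrow> nat) \<Rightarrow> (nat \<Rightarrow> nat) \<Rightarrow> nat list \<Rightarrow> ('a, nat list) gen" where
  "sift_g n tA vA cs = map_g (\<lambda>l. lincomb_g (vA l) (\<lambda>j. cs ! j) (\<lambda>j. tA j l) n) n"

definition qinv_all_g :: "nat \<Rightarrow> nat list \<Rightarrow> ('a, nat list) gen" where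
  "qinv_all_g n ws = map_g (\<lambda>j. qinv_g (ws ! j)) n"

definition clear_coeffs_g :: "nat \<Rightarrow> nat \<Rightarrow> (nat \<Rightarrow> nat \<Rightarrow> nat) \<Rightarrow> nat list \<Rightarrow> ('a, nat list) gen" where
  "clear_coeffs_g n a0 tA ss = map_g (\<lambda>j. gbind (lincomb_g a0 (\<lambda>l. ss ! l) (\<lambda>l. tA j l) n) (\<lambda>x. sub_g (ss ! j) x)) n"

definition update_g :: "nat \<Rightarrow> (nat \<Rightarrow> nat \<Rightarrow> nat) \<Rightarrow> nat list \<Rightarrow> nat list \<Rightarrow> ('a, nat list list) gen" where
  "update_g n tA ds us = map_g (\<lambda>j. map_g (\<lambda>l. lincomb_g (tA j l) (\<lambda>_. ds ! j) (\<lambda>_. us ! l) 1) n) n"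

lemma neg_pivot_coeffs_g_spec:
  assumes st: "stable F"
    and pre: "\<And>t. F t \<Longrightarrow> holds t a0 0 \<and> holds_table t n tA T \<and> (\<forall>j<n. holds t (vA j) (v j))"
  shows "hoare F (neg_pivot_coeffs_g n a0 tA vA) (\<lambda>r t. F t \<and> holds_list t n r (\<lambda>j. 0 - v j * T j j))"
  unfolding neg_pivot_coeffs_g_def
proof (rule map_g_values[OF st])
  fix j F' assume j: "j < n" and st': "stable F'" and FF: "\<And>t. F' t \<Longrightarrow> F t"
  show "hoare F' (gbind (mul_g (vA j) (tA j j)) (\<lambda>c. sub_g a0 c)) (\<lambda>r t. F' t \<and> holds t r (0 - v j * T j j))"
  proof (rule hoare_bind[OF mul_g_spec[OF st']])
    fix c
    show "hoare (\<lambda>t. F' t \<and> holds t c (v j * T j j)) (sub_g a0 c) (\<lambda>r t. F' t \<and> holds t r (0 - v j * T j j))"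
      by (rule hoare_conseq[OF sub_g_spec[OF stable_conj[OF st' stable_holds]]]) (use pre FF in blast)+
  qed (use pre FF j in blast)
qed

lemma sift_g_spec:
  assumes st: "stable F"
    and pre: "\<And>t. F t \<Longrightarrow> holds_table t n tA T \<and> (\<forall>j<n. holds t (vA j) (v j)) \<and> holds_list t n cs c"
  shows "hoare F (sift_g n tA vA cs) (\<lambda>r t. F t \<and> holds_list t n r (\<lambda>l. v l + (\<Sum>j<n. c j * T j l)))"
  unfolding sift_g_def
  by (intro map_g_values[OF st] lincomb_g_spec) (use pre in blast)+

lemma qinv_all_g_spec:
  assumes st: "stable F" and pre: "\<And>t. F t \<Longrightarrow> holds_list t n ws w"
  shows "hoare F (qinv_all_g n ws) (\<lambda>r t. F t \<and> holds_list t n r (\<lambda>j. qinv (w j)))"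
  unfolding qinv_all_g_def
  by (intro map_g_values[OF st] qinv_g_spec) (use pre in blast)+

lemma clear_coeffs_g_spec:
  assumes st: "stable F"
    and pre: "\<And>t. F t \<Longrightarrow> holds t a0 0 \<and> holds_table t n tA T \<and> holds_list t n ss s"
  shows "hoare F (clear_coeffs_g n a0 tA ss)
           (\<lambda>r t. F t \<and> holds_list t n r (\<lambda>j. s j - (0 + (\<Sum>l<n. s l * T j l))))"
  unfolding clear_coeffs_g_def
proof (rule map_g_values[OF st])
  fix j F' assume j: "j < n" and st': "stable F'" and FF: "\<And>t. F' t \<Longrightarrow> F t"
  show "hoare F' (gbind (lincomb_g a0 (\<lambda>l. ss ! l) (\<lambda>l. tA j l) n) (\<lambda>x. sub_g (ss ! j) x))
      (\<lambda>r t. F' t \<and> holds t r (s j - (0 + (\<Sum>l<n. s l * T j l))))"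
  proof (rule hoare_bind[OF lincomb_g_spec[OF st']])
    fix x
    show "hoare (\<lambda>t. F' t \<and> holds t x (0 + (\<Sum>l<n. s l * T j l))) (sub_g (ss ! j) x)
        (\<lambda>r t. F' t \<and> holds t r (s j - (0 + (\<Sum>l<n. s l * T j l))))"
      by (rule hoare_conseq[OF sub_g_spec[OF stable_conj[OF st' stable_holds]]]) (use pre FF j in blast)+
  qed (use pre FF j in blast)
qed

lemma update_g_spec:
  assumes st: "stable F"
    and pre: "\<And>t. F t \<Longrightarrow> holds_table t n tA T \<and> holds_list t n ds d \<and> holds_list t n us u"
  shows "hoare F (update_g n tA ds us) (\<lambda>r t. F t \<and> length r = n \<and>
           (\<forall>j<n. holds_list t n (r ! j) (\<lambda>l. T j l + (\<Sum>i<(1::nat). d j * u l))))"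
  unfolding update_g_def
proof (rule map_g_spec[OF st])
  fix j F' assume j: "j < n" and st': "stable F'" and FF: "\<And>t. F' t \<Longrightarrow> F t"
  show "hoare F' (map_g (\<lambda>l. lincomb_g (tA j l) (\<lambda>_. ds ! j) (\<lambda>_. us ! l) 1) n)
          (\<lambda>r t. F' t \<and> holds_list t n r (\<lambda>l. T j l + (\<Sum>i<(1::nat). d j * u l)))"
    by (intro map_g_values[OF st'] lincomb_g_spec) (use pre FF j in blast)+
qed (intro stable_intros)

definition insert_g :: "nat \<Rightarrow> nat \<Rightarrow> nat \<Rightarrow> (nat \<Rightarrow> nat \<Rightarrow> nat) \<Rightarrow> (nat \<Rightarrow> nat) \<Rightarrow>
    ('a::field, nat \<Rightarrow> nat \<Rightarrow> nat) gen" where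
  "insert_g n a0 a1 tA vA =
    gbind (neg_pivot_coeffs_g n a0 tA vA) (\<lambda>cs.
    gbind (sift_g n tA vA cs) (\<lambda>ws.
    gbind (qinv_all_g n ws) (\<lambda>qs.
    gbind (pointwise_mul_g n (\<lambda>j. ws ! j) (\<lambda>j. qs ! j)) (\<lambda>es.
    gbind (flags_g a1 (\<lambda>j. es ! j) n) (\<lambda>sf.
    gbind (lincomb_g a0 (\<lambda>j. fst sf ! j) (\<lambda>j. qs ! j) n) (\<lambda>c.
    gbind (pointwise_mul_g n (\<lambda>_. c) (\<lambda>l. ws ! l)) (\<lambda>us.
    gbind (clear_coeffs_g n a0 tA (fst sf)) (\<lambda>ds.
    gbind (update_g n tA ds us) (\<lambda>rss.
    gret (\<lambda>j l. rss ! j ! l))))))))))"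

lemma glen_insert: "glen (insert_g n a0 a1 tA vA) (6 * n * n + 10 * n)"
proof -
  have "glen (insert_g n a0 a1 tA vA :: ('a::field, nat \<Rightarrow> nat \<Rightarrow> nat) gen)
     (n * (1 + 1) + (n * (2 * n) + (n * 1 + (n * 1 + (2 * n + (2 * n + (n * 1 + (n * (2 * n + 1) +
       (n * (n * (2 * 1)) + 0)))))))))"
    unfolding insert_g_def neg_pivot_coeffs_g_def sift_g_def qinv_all_g_def pointwise_mul_g_def
      clear_coeffs_g_def update_g_def
    by (intro glen_bind glen_map glen_ops glen_lincomb glen_flags glen_ret)
  thus ?thesis by (simp add: algebra_simps)
qed

lemma insert_g_spec:
  assumes st: "stable F"
    and pre: "\<And>t. F t \<Longrightarrow> holds t a0 0 \<and> holds t a1 1 \<and> holds_table t n tA T \<and> (\<forall>j<n. holds t (vA j) (v j))"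
  shows "hoare F (insert_g n a0 a1 tA vA) (\<lambda>tA' t. F t \<and> holds_table t n tA' (insert_row n T v))"
proof -
  define w where "w l = v l + (\<Sum>j<n. (0 - v j * T j j) * T j l)" for l
  define e where "e j = w j * qinv (w j)" for j
  define s where "s j = prefix_flags e 1 j * e j" for j
  define c where "c = 0 + (\<Sum>j<n. s j * qinv (w j))"
  define d where "d j = s j - (0 + (\<Sum>l<n. s l * T j l))" for j
  have gadget: "hoare F (insert_g n a0 a1 tA vA)
          (\<lambda>tA' t. F t \<and> holds_table t n tA' (\<lambda>j l. T j l + (\<Sum>i<(1::nat). d j * (c * w l))))"
    unfolding insert_g_def
    apply (rule hoare_bind[OF neg_pivot_coeffs_g_spec[where T = T and v = v, OF st]], use pre in blast)
    apply (rule hoare_bind[OF sift_g_spec[where T = T and v = v and c = "\<lambda>j. 0 - v j * T j j"]],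
        intro stable_intros st, use pre in blast)
    apply (rule hoare_bind[OF qinv_all_g_spec[where w = w]], intro stable_intros st, simp add: w_def)
    apply (rule hoare_bind[OF pointwise_mul_g_spec[where x = w and y = "\<lambda>j. qinv (w j)"]],
        intro stable_intros st, simp add: w_def)
    apply (rule hoare_bind[OF flags_g_spec[where e = e and f0v = 1]],
        intro stable_intros st, use pre in \<open>simp add: e_def\<close>)
    apply (rule hoare_bind[OF lincomb_g_spec[where cv = s and yv = "\<lambda>j. qinv (w j)" and xv = 0]],
        intro stable_intros st, use pre in \<open>simp add: s_def\<close>)
    apply (rule hoare_bind[OF pointwise_mul_g_spec[where x = "\<lambda>_. c" and y = w]],
        intro stable_intros st, simp add: c_def w_def)
    apply (rule hoare_bind[OF clear_coeffs_g_spec[where T = T and s = s]],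
        intro stable_intros st, use pre in \<open>simp add: s_def\<close>)
    apply (rule hoare_bind[OF update_g_spec[where T = T and d = d and u = "\<lambda>l. c * w l"]],
        intro stable_intros st, use pre in \<open>simp add: d_def\<close>)
    by (rule hoare_ret) simp
  have computed: "T j l + d j * (c * w l) = insert_row n T v j l" if "j < n" "l < n" for j l
    using gadget_value_insert_row[OF that, of T v]
    unfolding gadget_value_def Let_def w_def e_def s_def c_def d_def by simp
  show ?thesis by (rule hoare_conseq[OF gadget]) (auto simp: computed)
qed

text \<open>The cells \<open>a0\<close>, \<open>a1\<close> hold the constants \<open>0\<close> and \<open>1\<close>; the
  table before any insertion is the zero table, all of whose entries are stored in \<open>a0\<close>.\<close>

fun rows_g :: "nat \<Rightarrow> nat \<Rightarrow> nat \<Rightarrow> nat \<Rightarrow> ('a::field, nat \<Rightarrow> nat \<Rightarrow> nat) gen" where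
  "rows_g n a0 a1 0 = gret (\<lambda>j l. a0)"
| "rows_g n a0 a1 (Suc r) = gbind (rows_g n a0 a1 r) (\<lambda>tA. insert_g n a0 a1 tA (\<lambda>l. r * n + l))"

lemma glen_rows: "glen (rows_g n a0 a1 r) (r * (6 * n * n + 10 * n))"
proof (induction r)
  case (Suc r)
  have "glen (rows_g n a0 a1 (Suc r) :: ('a::field, nat \<Rightarrow> nat \<Rightarrow> nat) gen)
          (r * (6 * n * n + 10 * n) + (6 * n * n + 10 * n))"
    unfolding rows_g.simps by (rule glen_bind[OF Suc.IH glen_insert])
  thus ?case by (simp add: algebra_simps)
qed (simp add: glen_ret)

lemma rows_g_spec:
  assumes st: "stable F"
    and pre: "\<And>t. F t \<Longrightarrow> holds t a0 0 \<and> holds t a1 1 \<and> (\<forall>r'<r. \<forall>l<n. holds t (r' * n + l) (A $$ (r', l)))"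
  shows "hoare F (rows_g n a0 a1 r) (\<lambda>tA t. F t \<and> holds_table t n tA (echelon_prefix A n r))"
  using pre
proof (induction r)
  case 0 show ?case unfolding rows_g.simps by (rule hoare_ret) (use 0 in auto)
next
  case (Suc r)
  show ?case unfolding rows_g.simps echelon_prefix.simps
  proof (rule hoare_bind[OF Suc.IH])
    fix tA
    let ?F = "\<lambda>t. F t \<and> holds_table t n tA (echelon_prefix A n r)"
    have st': "stable ?F" by (intro stable_intros st)
    show "hoare ?F (insert_g n a0 a1 tA (\<lambda>l. r * n + l))
        (\<lambda>tA' t. F t \<and> holds_table t n tA' (insert_row n (echelon_prefix A n r) (mrow A n r)))"
    proof (rule hoare_conseq[OF insert_g_spec[where T = "echelon_prefix A n r" and v = "mrow A n r", OF st']])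
      fix t assume Ft: "?F t"
      thus "holds t a0 0 \<and> holds t a1 1 \<and> holds_table t n tA (echelon_prefix A n r) \<and>
              (\<forall>l<n. holds t (r * n + l) (mrow A n r l))"
        using Suc.prems[of t] by (auto simp: mrow_def)
    qed auto
  qed (use Suc.prems in auto)
qed

definition echelon_g :: "nat \<Rightarrow> nat \<Rightarrow> ('a::field, nat \<Rightarrow> nat \<Rightarrow> nat) gen" where
  "echelon_g m n = gbind (const_g 0) (\<lambda>a0. gbind (const_g 1) (\<lambda>a1. rows_g n a0 a1 m))"

lemma glen_echelon: "glen (echelon_g m n) (1 + (1 + m * (6 * n * n + 10 * n)))"
  unfolding echelon_g_def by (intro glen_bind glen_ops glen_rows)

lemma echelon_g_spec:
  "hoare (\<lambda>t. \<forall>r<m. \<forall>l<n. holds t (r * n + l) (A $$ (r, l))) (echelon_g m n)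
     (\<lambda>tA t. holds_table t n tA (echelon_prefix A n m))"
  unfolding echelon_g_def
proof (rule hoare_bind[OF const_g_spec])
  let ?In = "\<lambda>t. \<forall>r<m. \<forall>l<n. holds t (r * n + l) (A $$ (r, l))"
  show "stable ?In" by (intro stable_intros)
  fix a0
  show "hoare (\<lambda>t. ?In t \<and> holds t a0 0) (gbind (const_g 1) (\<lambda>a1. rows_g n a0 a1 m))
          (\<lambda>tA t. holds_table t n tA (echelon_prefix A n m))"
  proof (rule hoare_bind[OF const_g_spec])
    show "stable (\<lambda>t. ?In t \<and> holds t a0 0)" by (intro stable_intros)
    fix a1
    have "stable (\<lambda>t. (?In t \<and> holds t a0 0) \<and> holds t a1 1)" by (intro stable_intros)
    thus "hoare (\<lambda>t. (?In t \<and> holds t a0 0) \<and> holds t a1 1) (rows_g n a0 a1 m)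
          (\<lambda>tA t. holds_table t n tA (echelon_prefix A n m))"
      by (rule hoare_conseq[OF rows_g_spec]) auto
  qed
qed

lemma echelon_g_run:
  assumes A: "A \<in> carrier_mat m n" and g: "echelon_g m n (m * n) = (tA, c)"
  shows "valid_slp (m * n) c" and "holds_table (run_slp c (entries A)) n tA (\<lambda>j l. trref A $$ (j, l))"
proof -
  have "holds (entries A) (r * n + l) (A $$ (r, l))" if "r < m" "l < n" for r l
  proof -
    have "r * n + l < Suc r * n" using that by simp
    also have "\<dots> \<le> m * n" using that by (intro mult_le_mono1) simp
    finally show ?thesis using entries_nth[OF A that] entries_length[OF A] by (simp add: holds_def)
  qed
  hence input: "\<forall>r<m. \<forall>l<n. holds (entries A) (r * n + l) (A $$ (r, l))" by blast
  have "echelon_g m n (length (entries A)) = (tA, c)" using g entries_length[OF A] by simp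
  from hoareD[OF echelon_g_spec input this]
  have "valid_slp (m * n) c \<and> holds_table (run_slp c (entries A)) n tA (echelon_prefix A n m)"
    using entries_length[OF A] by simp
  thus "valid_slp (m * n) c" and "holds_table (run_slp c (entries A)) n tA (\<lambda>j l. trref A $$ (j, l))"
    using echelon_prefix_trref[OF A] by auto
qed

fun recalls :: "nat \<Rightarrow> nat list \<Rightarrow> 'a instr list" where
  "recalls p [] = []"
| "recalls p (a # as) = Recall (p - a) # recalls (Suc p) as"

lemma length_recalls[simp]: "length (recalls p as) = length as"
  by (induction as arbitrary: p) auto

lemma valid_recalls: "\<forall>a\<in>set as. a < p \<Longrightarrow> valid_slp p (recalls p as)"
proof (induction as arbitrary: p)
  case (Cons a as)
  have "\<forall>b\<in>set as. b < Suc p" using Cons.prems by auto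
  hence "valid_slp (Suc p) (recalls (Suc p) as :: 'a instr list)" by (rule Cons.IH)
  moreover have "a < p" using Cons.prems by simp
  ultimately show ?case by (simp add: valid_slp_Cons)
qed simp

lemma run_recalls: "\<forall>a\<in>set as. a < length t \<Longrightarrow> run_slp (recalls (length t) as) t = t @ map ((!) t) as"
proof (induction as arbitrary: t)
  case (Cons a as)
  have "run_slp (recalls (length (t @ [t ! a])) as) (t @ [t ! a]) = (t @ [t ! a]) @ map ((!) (t @ [t ! a])) as"
    using Cons by (intro Cons.IH) auto
  moreover have "map ((!) (t @ [t ! a])) as = map ((!) t) as" using Cons.prems by (simp add: nth_append)
  ultimately show ?case using Cons.prems by (simp add: cell_absolute)
qed simp

definition table_addrs :: "nat \<Rightarrow> (nat \<Rightarrow> nat \<Rightarrow> nat) \<Rightarrow> nat list" where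
  "table_addrs n tA = concat (map (\<lambda>j. map (tA j) [0..<n]) [0..<n])"

definition trref_slp :: "nat \<Rightarrow> nat \<Rightarrow> 'a::field instr list" where
  "trref_slp m n = (case echelon_g m n (m * n) of (tA, c) \<Rightarrow> c @ recalls (m * n + length c) (table_addrs n tA))"

lemma trref_slp_length: "length (trref_slp m n :: 'a::field instr list) = 2 + m * (6 * n * n + 10 * n) + n * n"
proof -
  obtain tA c where g: "echelon_g m n (m * n) = (tA, c :: 'a instr list)" 
    by (cases "echelon_g m n (m * n) :: (nat \<Rightarrow> nat \<Rightarrow> nat) \<times> 'a instr list")
  have "length (snd (echelon_g m n (m * n) :: _ \<times> 'a instr list)) = 1 + (1 + m * (6 * n * n + 10 * n))"
    using glen_echelon[of m n, where 'a = 'a] unfolding glen_def by blast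
  hence "length c = 2 + m * (6 * n * n + 10 * n)" using g by simp
  thus ?thesis unfolding trref_slp_def g table_addrs_def by (simp add: length_concat sum_list_triv comp_def)
qed

theorem trref_slp_correct:
  assumes A: "(A :: 'a::field mat) \<in> carrier_mat m n"
  shows "valid_slp (m * n) (trref_slp m n :: 'a instr list)"
    and "slp_output (trref_slp m n) (n ^ 2) (entries A) = entries (trref A)"
proof -
  obtain tA c where g: "echelon_g m n (m * n) = (tA, c :: 'a instr list)" 
    by (cases "echelon_g m n (m * n) :: (nat \<Rightarrow> nat \<Rightarrow> nat) \<times> 'a instr list")
  define t where "t = run_slp c (entries A)"
  have table: "holds_table t n tA (\<lambda>j l. trref A $$ (j, l))"
    unfolding t_def by (rule echelon_g_run(2)[OF A g])
  have lt: "m * n + length c = length t" using entries_length[OF A] by (simp add: t_def)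
  have addrs: "\<forall>a\<in>set (table_addrs n tA). a < length t"
    using table by (auto simp: table_addrs_def holds_def)
  have prog: "trref_slp m n = c @ recalls (length t) (table_addrs n tA)"
    unfolding trref_slp_def g by (simp add: lt)
  show "valid_slp (m * n) (trref_slp m n :: 'a instr list)"
    unfolding prog valid_slp_append lt[symmetric]
    using echelon_g_run(1)[OF A g] valid_recalls[OF addrs[folded lt]] by simp
  have "map ((!) t) (table_addrs n tA) = concat (map (\<lambda>j. map (\<lambda>l. t ! tA j l) [0..<n]) [0..<n])"
    by (simp add: table_addrs_def map_concat comp_def)
  also have "\<dots> = concat (map (\<lambda>j. map (\<lambda>l. trref A $$ (j, l)) [0..<n]) [0..<n])"
    using table by (intro arg_cong[where f = concat] map_cong refl) (simp add: holds_def)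
  also have "\<dots> = entries (trref A)"
    using trref_carrier[of A] A by (simp add: entries_def)
  finally have out: "map ((!) t) (table_addrs n tA) = entries (trref A)" .
  have run: "run_slp (trref_slp m n) (entries A) = t @ entries (trref A)"
    unfolding prog run_slp_append t_def[symmetric] run_recalls[OF addrs] out ..
  have "length (entries (trref A)) = n ^ 2"
    using entries_length[OF trref_carrier[of A]] A by (simp add: power2_eq_square)
  thus "slp_output (trref_slp m n) (n ^ 2) (entries A) = entries (trref A)"
    unfolding slp_output_def Let_def run by simp
qed

lemma slp_output_constructible:
  assumes valid: "valid_slp (m * n) prog" and d: "d \<le> length prog" and k: "k < d"
  shows "constructible_on m n (\<lambda>A. slp_output prog d (entries A) ! k)"
proof -
  have "constructible_on m n (\<lambda>A. run_slp prog (entries A) ! (m * n + length prog - d + k))"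
    using d k by (intro slp_cell_constructible[OF valid]) auto
  moreover have "run_slp prog (entries A) ! (m * n + length prog - d + k) = slp_output prog d (entries A) ! k"
    if "A \<in> carrier_mat m n" for A
    using that d k by (simp add: slp_output_def entries_length)
  ultimately show ?thesis unfolding constructible_on_def by simp
qed

lemma trref_entry_constructible:
  assumes i: "i < n" and j: "j < n"
  shows "constructible_on m n (\<lambda>A. trref A $$ (i, j) :: 'a::field)"
proof -
  have "i * n + j < Suc i * n" using j by simp
  also have "\<dots> \<le> n ^ 2" using i by (simp add: power2_eq_square mult_le_mono1 del: mult_Suc)
  finally have ij: "i * n + j < n ^ 2" .
  have "n ^ 2 \<le> length (trref_slp m n :: 'a instr list)" by (simp add: trref_slp_length power2_eq_square)
  from slp_output_constructible[OF trref_slp_correct(1)[OF zero_carrier_mat] this ij]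
  have "constructible_on m n (\<lambda>A. slp_output (trref_slp m n :: 'a instr list) (n ^ 2) (entries A) ! (i * n + j))" .
  moreover have "slp_output (trref_slp m n) (n ^ 2) (entries A) ! (i * n + j) = trref A $$ (i, j)"
    if "A \<in> carrier_mat m n" for A :: "'a mat"
  proof -
    have "trref A \<in> carrier_mat n n" using trref_carrier[of A] that by simp
    thus ?thesis using trref_slp_correct(2)[OF that] entries_nth[OF _ i j] by simp
  qed
  ultimately show ?thesis unfolding constructible_on_def by simp
qed

lemma trref_slp_length_bound:
  fixes m n :: nat
  assumes m: "1 \<le> m" and n: "1 \<le> n"
  shows "2 + m * (6 * n * n + 10 * n) + n * n \<le> 18 * (m * n ^ 2 + n ^ 3)"
proof -
  have "1 \<le> m * n * n" "m * n \<le> m * n * n" "n * n \<le> n * n * n" using m n by simp_all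
  moreover have "2 + m * (6 * n * n + 10 * n) + n * n = 2 + 6 * (m * n * n) + 10 * (m * n) + n * n"
    by (simp add: algebra_simps)
  ultimately have "2 + m * (6 * n * n + 10 * n) + n * n \<le> 18 * (m * n * n) + n * n * n" by linarith
  thus ?thesis by (simp add: power2_eq_square power3_eq_cube)
qed

theorem proposition2p1:
  "\<exists>C::nat. \<forall>m n. 1 \<le> m \<longrightarrow> 1 \<le> n \<longrightarrow>
     (\<exists>prog :: 'a::field instr list.
        valid_slp (m * n) prog \<and>
        n ^ 2 \<le> length prog \<and>
        length prog \<le> C * (m * n ^ 2 + n ^ 3) \<and>
        (\<forall>A \<in> carrier_mat m n. slp_output prog (n ^ 2) (entries A) = entries (trref A)))
     \<and> (\<forall>i < n. \<forall>j < n. \<exists>f :: 'a mat \<Rightarrow> 'a. constructible m n f \<and>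
           (\<forall>A \<in> carrier_mat m n. f A = trref A $$ (i, j)))"
proof (rule exI[of _ 18], intro allI impI conjI)
  fix m n :: nat assume m: "1 \<le> m" and n: "1 \<le> n"
  let ?prog = "trref_slp m n :: 'a instr list"
  have len: "length ?prog = 2 + m * (6 * n * n + 10 * n) + n * n" by (rule trref_slp_length)
  show "\<exists>prog :: 'a instr list. valid_slp (m * n) prog \<and> n ^ 2 \<le> length prog \<and>
        length prog \<le> 18 * (m * n ^ 2 + n ^ 3) \<and>
        (\<forall>A \<in> carrier_mat m n. slp_output prog (n ^ 2) (entries A) = entries (trref A))"
  proof (intro exI[of _ ?prog] conjI ballI)
    show "valid_slp (m * n) ?prog" by (rule trref_slp_correct(1)[OF zero_carrier_mat])
    show "n ^ 2 \<le> length ?prog" using len by (simp add: power2_eq_square)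
    show "length ?prog \<le> 18 * (m * n ^ 2 + n ^ 3)" using len trref_slp_length_bound[OF m n] by simp
  qed (rule trref_slp_correct(2))
next
  fix m n i j :: nat assume "1 \<le> m" "1 \<le> n" "i < n" "j < n"
  thus "\<exists>f :: 'a mat \<Rightarrow> 'a. constructible m n f \<and> (\<forall>A \<in> carrier_mat m n. f A = trref A $$ (i, j))"
    using trref_entry_constructible unfolding constructible_on_def by blast
qed

end
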